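(* Let $(u^n_\Delta)_{n\ge0}$ be a discrete solution with associated $(\vec x^n_\Delta)_{n\ge0}$. Then for every $N\in\mathbb{N}$, $$\frac1{2\tau}\sum_{n=1}^N\mathbf{W}_2(u^n_\Delta,u^{n-1}_\Delta)^2\le\mathbf{E}(u^0_\Delta)-\mathbf{E}(u^N_\Delta),$$ $$\frac\tau2\sum_{n=1}^N[\partial_{\vec x}\mathbb{E}_{\boldsymbol\xi}(\vec x^n_\Delta)]^T\mathrm{W}^{-1}[\partial_{\vec x}\mathbb{E}_{\boldsymbol\xi}(\vec x^n_\Delta)]\le\mathbf{E}(u^0_\Delta)-\mathbf{E}(u^N_\Delta).$$
   Context: $I=[a,b]$, $M>0$, $\tau>0$ with $\tau\Lambda<1$. $\mathrm{P}:[0,\infty)\to\mathbb{R}$ continuous, $C^2$ on $(0,\infty)$, with $\mathrm{P}(0)=0$, $\mathrm{P}'>0$ on $(0,\infty)$, $\lim_{r\downarrow0}\mathrm{P}'(r)<\infty$, $\lim_{r\to\infty}\mathrm{P}'(r)=\infty$, $s\mapsto\mathrm{P}(1/s)$ concave. $\phi$ is a second antiderivative of $r\mapsto\mathrm{P}'(r)/r$, $\psi(s)=s\phi(1/s)$. $V\in C^2(I)$, $V_x(a)=V_x(b)=0$, $\Lambda=\max_I(-V_{xx})$. $\mathbf{E}(u)=\int_I\phi(u)+\int_IuV$; $\mathbf{W}_2$ is the $L^2$-Wasserstein distance. Mesh $\boldsymbol\xi=(\xi_0,\dots,\xi_K)$, $0=\xi_0<\dots<\xi_K=M$, $\delta_k=\xi_k-\xi_{k-1}$;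 $\mathfrak{x}=\{\vec x:a<x_1<\dots<x_{K-1}<b\}$, $x_0=a$, $x_K=b$; $\mathbf{u}_{\boldsymbol\xi}[\vec x]=\sum_k\frac{\delta_k}{x_k-x_{k-1}}\mathbf{1}_{(x_{k-1},x_k]}$, $\mathrm{D}^M_{\boldsymbol\xi}(I)=\mathbf{u}_{\boldsymbol\xi}[\mathfrak{x}]$; $\theta_k$ the hat functions on $[0,M]$ w.r.t. $\boldsymbol\xi$, $\mathbf{X}_{\boldsymbol\xi}[\vec x]=\sum_kx_k\theta_k$; $\mathbb{E}_{\boldsymbol\xi}(\vec x)=\sum_k\delta_k\psi(\frac{x_k-x_{k-1}}{\delta_k})+\int_0^MV(\mathbf{X}_{\boldsymbol\xi}[\vec x])d\xi$ with Euclidean gradient $\partial_{\vec x}\mathbb{E}_{\boldsymbol\xi}$. $\mathrm{W}$ is the symmetric tridiagonal matrix with $\mathrm{W}_{k,k}=\frac13(\delta_k+\delta_{k+1})$, $\mathrm{W}_{k,k+1}=\mathrm{W}_{k+1,k}=\frac16\delta_{k+1}$. A discrete solution: $u^0_\Delta\in\mathrm{D}^M_{\boldsymbol\xi}(I)$ given, and $u^n_\Delta$ the (unique) minimizer over $\mathrm{D}^M_{\boldsymbol\xi}(I)$ of $\frac1{2\tau}\mathbf{W}_2(u,u^{n-1}_\Delta)^2+\mathbf{E}(u)$; $\vec x^n_\Delta\in\mathfrak{x}$ with $u^n_\Delta=\mathbf{u}_{\boldsymbol\xi}[\vec x^n_\Delta]$. *)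

theory Defs
  imports "HOL-Probability.Probability"
begin

text \<open>Vectors in R^(K-1) are represented as functions nat => real; only the
  entries with index 1..K-1 are meaningful. The boundary values are x_0 = a, x_K = b.\<close>

definition ext_vec :: "real \<Rightarrow> real \<Rightarrow> nat \<Rightarrow> (nat \<Rightarrow> real) \<Rightarrow> nat \<Rightarrow> real" where
  "ext_vec a b K x = (\<lambda>k. if k = 0 then a else if k = K then b else x k)"

definition is_mesh :: "real \<Rightarrow> nat \<Rightarrow> (nat \<Rightarrow> real) \<Rightarrow> bool" where
  "is_mesh M K \<xi> \<longleftrightarrow> \<xi> 0 = 0 \<and> \<xi> K = M \<and> (\<forall>k. 1 \<le> k \<and> k \<le> K \<longrightarrow> \<xi> (k - 1) < \<xi> k)"

definition mesh_delta :: "(nat \<Rightarrow> real) \<Rightarrow> nat \<Rightarrow> real" where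
  "mesh_delta \<xi> k = \<xi> k - \<xi> (k - 1)"

definition xset :: "real \<Rightarrow> real \<Rightarrow> nat \<Rightarrow> (nat \<Rightarrow> real) set" where
  "xset a b K = {x. \<forall>k. 1 \<le> k \<and> k \<le> K \<longrightarrow> ext_vec a b K x (k - 1) < ext_vec a b K x k}"

definition u_xi :: "real \<Rightarrow> real \<Rightarrow> nat \<Rightarrow> (nat \<Rightarrow> real) \<Rightarrow> (nat \<Rightarrow> real) \<Rightarrow> real \<Rightarrow> real" where
  "u_xi a b K \<xi> x = (\<lambda>y. \<Sum>k=1..K. mesh_delta \<xi> k / (ext_vec a b K x k - ext_vec a b K x (k - 1))
       * indicator {ext_vec a b K x (k - 1)<..ext_vec a b K x k} y)"

definition Dset :: "real \<Rightarrow> real \<Rightarrow> nat \<Rightarrow> (nat \<Rightarrow> real) \<Rightarrow> (real \<Rightarrow> real) set" where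
  "Dset a b K \<xi> = u_xi a b K \<xi> ` xset a b K"

definition hat :: "nat \<Rightarrow> (nat \<Rightarrow> real) \<Rightarrow> nat \<Rightarrow> real \<Rightarrow> real" where
  "hat K \<xi> k s =
     (if 0 < k \<and> \<xi> (k - 1) \<le> s \<and> s \<le> \<xi> k then (s - \<xi> (k - 1)) / (\<xi> k - \<xi> (k - 1))
      else if k < K \<and> \<xi> k \<le> s \<and> s \<le> \<xi> (k + 1) then (\<xi> (k + 1) - s) / (\<xi> (k + 1) - \<xi> k)
      else 0)"

definition X_xi :: "real \<Rightarrow> real \<Rightarrow> nat \<Rightarrow> (nat \<Rightarrow> real) \<Rightarrow> (nat \<Rightarrow> real) \<Rightarrow> real \<Rightarrow> real" where
  "X_xi a b K \<xi> x = (\<lambda>s. \<Sum>k=0..K. ext_vec a b K x k * hat K \<xi> k s)"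

definition E_disc :: "(real \<Rightarrow> real) \<Rightarrow> (real \<Rightarrow> real) \<Rightarrow> real \<Rightarrow> real \<Rightarrow> real \<Rightarrow> nat \<Rightarrow> (nat \<Rightarrow> real)
    \<Rightarrow> (nat \<Rightarrow> real) \<Rightarrow> real" where
  "E_disc \<phi> V a b M K \<xi> x =
     (\<Sum>k=1..K. mesh_delta \<xi> k *
        (let s = (ext_vec a b K x k - ext_vec a b K x (k - 1)) / mesh_delta \<xi> k in s * \<phi> (1 / s)))
     + integral {0..M} (\<lambda>s. V (X_xi a b K \<xi> x s))"

definition grad_E_disc :: "(real \<Rightarrow> real) \<Rightarrow> (real \<Rightarrow> real) \<Rightarrow> real \<Rightarrow> real \<Rightarrow> real \<Rightarrow> nat \<Rightarrow> (nat \<Rightarrow> real)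
    \<Rightarrow> (nat \<Rightarrow> real) \<Rightarrow> nat \<Rightarrow> real" where
  "grad_E_disc \<phi> V a b M K \<xi> x k = deriv (\<lambda>t. E_disc \<phi> V a b M K \<xi> (x(k := t))) (x k)"

text \<open>The tridiagonal matrix W (entries indexed 1..K-1).\<close>
definition Wmat :: "(nat \<Rightarrow> real) \<Rightarrow> nat \<Rightarrow> nat \<Rightarrow> real" where
  "Wmat \<xi> i j =
     (if i = j then (mesh_delta \<xi> i + mesh_delta \<xi> (i + 1)) / 3
      else if j = i + 1 then mesh_delta \<xi> (i + 1) / 6
      else if i = j + 1 then mesh_delta \<xi> (j + 1) / 6
      else 0)"

text \<open>g^T W^{-1} g, where W^{-1} g is the unique solution y of W y = g (indices 1..K-1).\<close>
definition Winv_quad :: "(nat \<Rightarrow> real) \<Rightarrow> nat \<Rightarrow> (nat \<Rightarrow> real) \<Rightarrow> real" where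
  "Winv_quad \<xi> K g =
     (let y = (THE y. (\<forall>i\<in>{1..K-1}. (\<Sum>j=1..K-1. Wmat \<xi> i j * y j) = g i)
                      \<and> (\<forall>i. i \<notin> {1..K-1} \<longrightarrow> y i = 0))
      in \<Sum>i=1..K-1. g i * y i)"

definition dens_meas :: "real \<Rightarrow> real \<Rightarrow> (real \<Rightarrow> real) \<Rightarrow> real measure" where
  "dens_meas a b u = density lborel (\<lambda>y. ennreal (u y) * indicator {a..b} y)"

definition couplings :: "real measure \<Rightarrow> real measure \<Rightarrow> (real \<times> real) measure set" where
  "couplings \<mu> \<nu> = {\<pi>. sets \<pi> = sets (borel :: (real \<times> real) measure)
       \<and> distr \<pi> borel fst = \<mu> \<and> distr \<pi> borel snd = \<nu>}"

definition W2 :: "real \<Rightarrow> real \<Rightarrow> (real \<Rightarrow> real) \<Rightarrow> (real \<Rightarrow> real) \<Rightarrow> real" where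
  "W2 a b u v = sqrt (enn2real (INF \<pi> \<in> couplings (dens_meas a b u) (dens_meas a b v).
       \<integral>\<^sup>+ p. ennreal ((fst p - snd p)\<^sup>2) \<partial>\<pi>))"

definition E_cont :: "(real \<Rightarrow> real) \<Rightarrow> (real \<Rightarrow> real) \<Rightarrow> real \<Rightarrow> real \<Rightarrow> (real \<Rightarrow> real) \<Rightarrow> real" where
  "E_cont \<phi> V a b u = integral {a..b} (\<lambda>y. \<phi> (u y)) + integral {a..b} (\<lambda>y. u y * V y)"

end

theory Submission
  imports Defs
begin

text \<open>For a node vector \<open>x\<close>, the density \<open>u\<^sub>\<xi>[x]\<close> is the push-forward of Lebesgue measure on
  \<open>[0, M]\<close> under the piecewise linear map \<open>X\<^sub>\<xi>[x]\<close>, whose inverse is the cumulative distribution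
  function of \<open>u\<^sub>\<xi>[x]\<close>. The coupling induced by \<open>(X\<^sub>\<xi>[y], X\<^sub>\<xi>[z])\<close> is optimal, as an explicit pair of
  Kantorovich potentials shows, hence \<open>W\<^sub>2(u\<^sub>\<xi>[y], u\<^sub>\<xi>[z])\<^sup>2 = \<integral>\<^sub>0\<^sup>M (X\<^sub>\<xi>[y] - X\<^sub>\<xi>[z])\<^sup>2 = d\<^sup>T W d\<close> with
  \<open>d = y - z\<close>; similarly \<open>E(u\<^sub>\<xi>[x]) = E\<^sub>\<xi>(x)\<close>. Comparing the minimiser \<open>u\<^sup>n\<close> with the competitor
  \<open>u\<^sup>n\<^sup>-\<^sup>1\<close> and telescoping gives the first estimate. Minimality of \<open>x\<^sup>n\<close> in each interior
  coordinate gives the discrete Euler--Lagrange equation \<open>\<partial>E\<^sub>\<xi>(x\<^sup>n) = - W (x\<^sup>n - x\<^sup>n\<^sup>-\<^sup>1) / \<tau>\<close>, so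
  \<open>g\<^sup>T W\<^sup>-\<^sup>1 g = d\<^sup>T W d / \<tau>\<^sup>2\<close> and the second estimate coincides term by term with the first.\<close>

section \<open>Piecewise linear interpolation\<close>

definition increasing_upto :: "nat \<Rightarrow> (nat \<Rightarrow> real) \<Rightarrow> bool" where
  "increasing_upto K p \<longleftrightarrow> (\<forall>k. 1 \<le> k \<and> k \<le> K \<longrightarrow> p (k - 1) < p k)"

definition pwlin :: "nat \<Rightarrow> (nat \<Rightarrow> real) \<Rightarrow> (nat \<Rightarrow> real) \<Rightarrow> real \<Rightarrow> real" where
  "pwlin K p v s = (\<Sum>j=0..K. v j * hat K p j s)"

lemma increasing_upto_step: "increasing_upto K p \<Longrightarrow> 1 \<le> k \<Longrightarrow> k \<le> K \<Longrightarrow> p (k - 1) < p k"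
  by (auto simp: increasing_upto_def)

lemma increasing_upto_less: assumes "increasing_upto K p" "i < j" "j \<le> K" shows "p i < p j"
  using assms(2,3)
proof (induction j)
  case 0 then show ?case by simp
next
  case (Suc j)
  have s: "p j < p (Suc j)" using increasing_upto_step[OF assms(1), of "Suc j"] Suc.prems by simp
  show ?case
  proof (cases "i = j")
    case True then show ?thesis using s by simp
  next
    case False then have "i < j" using Suc.prems by simp
    then show ?thesis using Suc.IH Suc.prems s by simp
  qed
qed

lemma increasing_upto_le: assumes "increasing_upto K p" "i \<le> j" "j \<le> K" shows "p i \<le> p j"
  using increasing_upto_less[OF assms(1), of i j] assms by (cases "i = j") auto

lemma hat_off_cell:
  assumes "increasing_upto K p" "1 \<le> k" "k \<le> K" "p (k - 1) \<le> s" "s \<le> p k" "j \<noteq> k - 1" "j \<noteq> k" "j \<le> K"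
  shows "hat K p j s = 0"
proof (cases "j < k - 1")
  case True
  have A: "\<not> (0 < j \<and> p (j - 1) \<le> s \<and> s \<le> p j) \<or> j = 0"
  proof -
    have "p j < p (k - 1)" using increasing_upto_less[OF assms(1), of j "k-1"] True assms by simp
    then show ?thesis using assms by auto
  qed
  show ?thesis
  proof (cases "j + 1 < k - 1")
    case True
    then have "p (j+1) < p (k-1)" using increasing_upto_less[OF assms(1), of "j+1" "k-1"] assms by simp
    then show ?thesis using A assms unfolding hat_def by auto
  next
    case False
    then have "j + 1 = k - 1" using True by simp
    then show ?thesis using A assms unfolding hat_def by auto
  qed
next
  case False
  then have "k < j" using assms by simp
  have D: "p k < p j" using increasing_upto_less[OF assms(1) \<open>k < j\<close> assms(8)] .
  show ?thesis
  proof (cases "j - 1 = k")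
    case True then show ?thesis using D assms \<open>k<j\<close> unfolding hat_def by auto
  next
    case False
    then have "p k < p (j - 1)"
      using increasing_upto_less[OF assms(1), of k "j-1"] \<open>k < j\<close> assms(8) by simp
    then show ?thesis using D assms \<open>k<j\<close> unfolding hat_def by auto
  qed
qed

lemma hat_rising:
  assumes "increasing_upto K p" "1 \<le> k" "k \<le> K" "p (k - 1) \<le> s" "s \<le> p k"
  shows "hat K p k s = (s - p (k - 1)) / (p k - p (k - 1))"
  using assms unfolding hat_def by auto

lemma hat_falling:
  assumes "increasing_upto K p" "1 \<le> k" "k \<le> K" "p (k - 1) \<le> s" "s \<le> p k"
  shows "hat K p (k - 1) s = (p k - s) / (p k - p (k - 1))"
proof -
  have lt: "p (k - 1) < p k" using increasing_upto_step[OF assms(1-3)] .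
  show ?thesis
  proof (cases "0 < k - 1 \<and> p (k - 1 - 1) \<le> s \<and> s \<le> p (k - 1)")
    case True
    then have "s = p (k - 1)" using assms by simp
    moreover have "p (k - 1 - 1) < p (k - 1)"
      using increasing_upto_step[OF assms(1), of "k-1"] True assms by auto
    ultimately show ?thesis using True lt unfolding hat_def by simp
  next
    case False
    have c: "k - 1 < K" "k - 1 + 1 = k" using assms by auto
    show ?thesis unfolding hat_def using False c assms by (simp only: if_False if_True c) simp
  qed
qed

lemma pwlin_on_cell:
  assumes "increasing_upto K p" "1 \<le> k" "k \<le> K" "p (k - 1) \<le> s" "s \<le> p k"
  shows "pwlin K p v s = v (k - 1) + (s - p (k - 1)) * (v k - v (k - 1)) / (p k - p (k - 1))"
proof -
  have lt: "p (k - 1) < p k" using increasing_upto_step[OF assms(1-3)] .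
  have "pwlin K p v s = (\<Sum>j\<in>{k-1,k}. v j * hat K p j s)"
    unfolding pwlin_def
    by (rule sum.mono_neutral_right) (use assms hat_off_cell[OF assms] in auto)
  also have "\<dots> = v (k-1) * ((p k - s) / (p k - p (k - 1)))
      + v k * ((s - p (k - 1)) / (p k - p (k - 1)))"
    using assms hat_rising[OF assms] hat_falling[OF assms] by simp
  also have "\<dots> = (v (k-1) * (p k - s) + v k * (s - p (k - 1))) / (p k - p (k - 1))"
    by (simp add: add_divide_distrib)
  also have "\<dots> = v (k - 1) + (s - p (k - 1)) * (v k - v (k - 1)) / (p k - p (k - 1))"
    using lt by (simp add: divide_simps) (simp add: algebra_simps)
  finally show ?thesis .
qed

lemma exists_cell:
  assumes "increasing_upto K p" "1 \<le> K" "p 0 \<le> s" "s \<le> p K"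
  shows "\<exists>k. 1 \<le> k \<and> k \<le> K \<and> p (k - 1) \<le> s \<and> s \<le> p k"
proof -
  define k where "k = (LEAST k. s \<le> p k)"
  have k1: "s \<le> p k" unfolding k_def by (rule LeastI[of _ K]) (use assms in auto)
  have k2: "k \<le> K" unfolding k_def by (rule Least_le) (use assms in auto)
  show ?thesis
  proof (cases "k = 0")
    case True
    then have "s = p 0" using k1 assms by simp
    then show ?thesis using assms increasing_upto_le[OF assms(1), of 0 1] by (intro exI[of _ 1]) auto
  next
    case False
    have "\<not> s \<le> p (k - 1)"
      using not_less_Least[of "k - 1" "\<lambda>k. s \<le> p k"] False unfolding k_def by simp
    then show ?thesis using False k1 k2 by (intro exI[of _ k]) auto
  qed
qed

lemma pwlin_node:
  assumes "increasing_upto K p" "1 \<le> K" "k \<le> K"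
  shows "pwlin K p v (p k) = v k"
proof (cases "k = 0")
  case True
  have h: "p 0 \<le> p 1" "p 0 < p 1" using increasing_upto_step[OF assms(1), of 1] assms by auto
  have "pwlin K p v (p 0) = v (1 - 1) + (p 0 - p (1 - 1)) * (v 1 - v (1 - 1)) / (p 1 - p (1 - 1))"
    by (rule pwlin_on_cell[OF assms(1)]) (use assms h in auto)
  then show ?thesis using True by simp
next
  case False
  have h: "p (k-1) < p k" using increasing_upto_step[OF assms(1), of k] assms False by auto
  have "pwlin K p v (p k) = v (k - 1) + (p k - p (k - 1)) * (v k - v (k - 1)) / (p k - p (k - 1))"
    by (rule pwlin_on_cell[OF assms(1)]) (use assms h False in auto)
  also have "\<dots> = v k" using h by simp
  finally show ?thesis .
qed

lemma pwlin_cell_bounds: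
  assumes "increasing_upto K p" "increasing_upto K v" "1 \<le> k" "k \<le> K" "p (k - 1) \<le> s" "s \<le> p k"
  shows "v (k - 1) \<le> pwlin K p v s" "pwlin K p v s \<le> v k"
proof -
  have lt: "p (k - 1) < p k" "v (k - 1) < v k" using increasing_upto_step assms by auto
  have e: "pwlin K p v s = v (k - 1) + (s - p (k - 1)) * (v k - v (k - 1)) / (p k - p (k - 1))"
    using pwlin_on_cell[OF assms(1,3-6)] .
  have "0 \<le> (s - p (k - 1)) * (v k - v (k - 1)) / (p k - p (k - 1))"
    using lt assms by simp
  then show "v (k - 1) \<le> pwlin K p v s" using e by simp
  have q: "(s - p (k - 1)) / (p k - p (k - 1)) \<le> 1" using lt assms by simp
  have "(s - p (k - 1)) / (p k - p (k - 1)) * (v k - v (k - 1)) \<le> 1 * (v k - v (k - 1))"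
    by (rule mult_right_mono[OF q]) (use lt in simp)
  then have "(s - p (k - 1)) * (v k - v (k - 1)) / (p k - p (k - 1)) \<le> (v k - v (k - 1))"
    by (simp add: mult.commute times_divide_eq_right)
  then show "pwlin K p v s \<le> v k" using e by simp
qed

lemma pwlin_inverse:
  assumes "increasing_upto K p" "increasing_upto K v" "1 \<le> K" "p 0 \<le> s" "s \<le> p K"
  shows "pwlin K v p (pwlin K p v s) = s"
proof -
  obtain k where k: "1 \<le> k" "k \<le> K" "p (k - 1) \<le> s" "s \<le> p k"
    using exists_cell[OF assms(1,3-5)] by blast
  have lt: "p (k - 1) < p k" "v (k - 1) < v k" using increasing_upto_step assms k by auto
  define t where "t = pwlin K p v s"
  have r: "v (k - 1) \<le> t" "t \<le> v k" using pwlin_cell_bounds[OF assms(1,2) k] t_def by auto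
  have e: "t = v (k - 1) + (s - p (k - 1)) * (v k - v (k - 1)) / (p k - p (k - 1))"
    using pwlin_on_cell[OF assms(1) k] t_def by simp
  have "pwlin K v p t = p (k - 1) + (t - v (k - 1)) * (p k - p (k - 1)) / (v k - v (k - 1))"
    using pwlin_on_cell[OF assms(2) k(1,2) r] .
  also have "\<dots> = s"
  proof -
    have "(t - v (k - 1)) * (p k - p (k - 1)) / (v k - v (k - 1)) = s - p (k - 1)"
      using lt unfolding e by simp
    then show ?thesis by simp
  qed
  finally show ?thesis unfolding t_def .
qed

lemma pwlin_range:
  assumes "increasing_upto K p" "increasing_upto K v" "1 \<le> K" "p 0 \<le> s" "s \<le> p K"
  shows "v 0 \<le> pwlin K p v s \<and> pwlin K p v s \<le> v K"
proof -
  obtain k where k: "1 \<le> k" "k \<le> K" "p (k - 1) \<le> s" "s \<le> p k"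
    using exists_cell[OF assms(1,3-5)] by blast
  have "v 0 \<le> v (k - 1)" "v k \<le> v K" using increasing_upto_le[OF assms(2)] k by auto
  then show ?thesis using pwlin_cell_bounds[OF assms(1,2) k] by auto
qed

lemma pwlin_mono:
  assumes "increasing_upto K p" "increasing_upto K v" "1 \<le> K" "p 0 \<le> s" "s \<le> s'" "s' \<le> p K"
  shows "pwlin K p v s \<le> pwlin K p v s'"
proof -
  have s1: "s \<le> p K" "p 0 \<le> s'" using assms by linarith+
  obtain k where k: "1 \<le> k" "k \<le> K" "p (k - 1) \<le> s" "s \<le> p k"
    using exists_cell[OF assms(1,3,4) s1(1)] by blast
  obtain k' where k': "1 \<le> k'" "k' \<le> K" "p (k' - 1) \<le> s'" "s' \<le> p k'"
    using exists_cell[OF assms(1,3) s1(2) assms(6)] by blast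
  have lt: "p (k - 1) < p k" "v (k - 1) < v k" using increasing_upto_step assms k by auto
  consider "k = k'" | "k < k'" | "k' < k" by linarith
  then show ?thesis
  proof cases
    case 1
    have "(s - p (k - 1)) * (v k - v (k - 1)) / (p k - p (k - 1))
        \<le> (s' - p (k - 1)) * (v k - v (k - 1)) / (p k - p (k - 1))"
      using lt assms by (intro divide_right_mono mult_right_mono) auto
    then show ?thesis using pwlin_on_cell[OF assms(1) k] pwlin_on_cell[OF assms(1) k'] 1 by simp
  next
    case 2
    have "v k \<le> v (k' - 1)" using increasing_upto_le[OF assms(2), of k "k'-1"] 2 k' by simp
    then show ?thesis
      using pwlin_cell_bounds[OF assms(1,2) k] pwlin_cell_bounds[OF assms(1,2) k'] by linarith
  next
    case 3
    have "p k' \<le> p (k - 1)" using increasing_upto_le[OF assms(1), of k' "k-1"] 3 k by simp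
    then have "s = s'" using k k' assms by linarith
    then show ?thesis by simp
  qed
qed

lemma continuous_on_pwlin:
  assumes "increasing_upto K p" "1 \<le> K"
  shows "continuous_on {p 0..p K} (pwlin K p v)"
proof -
  have U: "{p 0..p K} = (\<Union>k\<in>{1..K}. {p (k-1)..p k})"
  proof
    show "{p 0..p K} \<subseteq> (\<Union>k\<in>{1..K}. {p (k-1)..p k})"
    proof
      fix s assume "s \<in> {p 0..p K}"
      then obtain k where k: "1 \<le> k" "k \<le> K" "p (k - 1) \<le> s" "s \<le> p k"
        using exists_cell[OF assms] by auto
      then show "s \<in> (\<Union>k\<in>{1..K}. {p (k-1)..p k})" by auto
    qed
    show "(\<Union>k\<in>{1..K}. {p (k-1)..p k}) \<subseteq> {p 0..p K}"
    proof
      fix s assume "s \<in> (\<Union>k\<in>{1..K}. {p (k-1)..p k})"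
      then obtain k where k: "1 \<le> k" "k \<le> K" "p (k - 1) \<le> s" "s \<le> p k" by auto
      have "p 0 \<le> p (k - 1)" "p k \<le> p K" using increasing_upto_le[OF assms(1)] k by auto
      then show "s \<in> {p 0..p K}" using k by auto
    qed
  qed
  have "continuous_on (\<Union>k\<in>{1..K}. {p (k-1)..p k}) (pwlin K p v)"
  proof (rule continuous_on_closed_Union)
    fix k assume k: "k \<in> {1..K}"
    have c: "continuous_on {p (k-1)..p k}
        (\<lambda>s. v (k - 1) + (s - p (k - 1)) * ((v k - v (k - 1)) / (p k - p (k - 1))))"
      by (intro continuous_intros)
    show "continuous_on {p (k-1)..p k} (pwlin K p v)"
    proof (rule continuous_on_eq[OF c])
      fix s assume "s \<in> {p (k-1)..p k}"
      then show "v (k - 1) + (s - p (k - 1)) * ((v k - v (k - 1)) / (p k - p (k - 1))) = pwlin K p v s"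
        using pwlin_on_cell[OF assms(1), of k s v] k by simp
    qed
  qed simp_all
  then show ?thesis using U by simp
qed

lemma pwlin_has_real_derivative:
  assumes "increasing_upto K p" "1 \<le> k" "k \<le> K" "p (k - 1) < s" "s < p k"
  shows "(pwlin K p v has_real_derivative (v k - v (k - 1)) / (p k - p (k - 1))) (at s)"
proof -
  have d: "((\<lambda>s. v (k - 1) + (s - p (k - 1)) * ((v k - v (k - 1)) / (p k - p (k - 1))))
     has_real_derivative (v k - v (k - 1)) / (p k - p (k - 1))) (at s)"
    using assms(4,5) by (auto intro!: derivative_eq_intros)
  show ?thesis
  proof (rule has_field_derivative_transform_within_open[OF d, of "{p (k-1)<..<p k}"])
    fix y assume "y \<in> {p (k-1)<..<p k}"
    then show "v (k - 1) + (y - p (k - 1)) * ((v k - v (k - 1)) / (p k - p (k - 1))) = pwlin K p v y"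
      using pwlin_on_cell[OF assms(1-3), of y v] by simp
  qed (use assms in auto)
qed

lemma pwlin_diff: "pwlin K p v s - pwlin K p w s = pwlin K p (\<lambda>j. v j - w j) s"
  unfolding pwlin_def by (simp add: sum_subtractf left_diff_distrib)

lemma has_integral_cells:
  fixes f :: "real \<Rightarrow> real"
  assumes "increasing_upto K p" "m \<le> K" "\<And>k. 1 \<le> k \<Longrightarrow> k \<le> m \<Longrightarrow> (f has_integral I k) {p (k-1)..p k}"
  shows "(f has_integral (\<Sum>k=1..m. I k)) {p 0..p m}"
  using assms(2,3)
proof (induction m)
  case 0
  then show ?case by (simp add: has_integral_refl(2))
next
  case (Suc m)
  have ih: "(f has_integral (\<Sum>k=1..m. I k)) {p 0..p m}" using Suc by auto
  have pc: "(f has_integral I (Suc m)) {p m..p (Suc m)}" using Suc.prems(2)[of "Suc m"] by simp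
  have le: "p 0 \<le> p m" "p m \<le> p (Suc m)" using increasing_upto_le[OF assms(1)] Suc.prems(1) by auto
  have "(f has_integral (\<Sum>k=1..m. I k) + I (Suc m)) {p 0..p (Suc m)}"
    by (rule has_integral_combine[OF le ih pc])
  then show ?case by simp
qed

lemma has_integral_affine_sq:
  fixes \<alpha> \<beta> l r :: real
  assumes "l < r"
  shows "((\<lambda>s. (\<alpha> + (s - l) * ((\<beta> - \<alpha>) / (r - l)))\<^sup>2)
    has_integral (r - l) * (\<alpha>\<^sup>2 + \<alpha> * \<beta> + \<beta>\<^sup>2) / 3) {l..r}"
proof -
  define c where "c = (\<beta> - \<alpha>) / (r - l)"
  define G where "G = (\<lambda>s. \<alpha>\<^sup>2 * (s - l) + \<alpha> * c * (s - l)\<^sup>2 + c\<^sup>2 * (s - l) ^ 3 / 3)"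
  have "((\<lambda>s. (\<alpha> + (s - l) * c)\<^sup>2) has_integral (G r - G l)) {l..r}"
  proof (rule fundamental_theorem_of_calculus)
    show "l \<le> r" using assms by simp
    fix x assume "x \<in> {l..r}"
    have "(G has_real_derivative (\<alpha> + (x - l) * c)\<^sup>2) (at x within {l..r})"
      unfolding G_def
      by (rule derivative_eq_intros refl | simp)+ (simp add: power2_eq_square algebra_simps)
    then show "(G has_vector_derivative (\<alpha> + (x - l) * c)\<^sup>2) (at x within {l..r})"
      by (simp add: has_real_derivative_iff_has_vector_derivative)
  qed
  moreover have "G r - G l = (r - l) * (\<alpha>\<^sup>2 + \<alpha> * \<beta> + \<beta>\<^sup>2) / 3"
  proof -
    have cr: "c * (r - l) = \<beta> - \<alpha>" unfolding c_def using assms by simp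
    have "G r - G l = \<alpha>\<^sup>2 * (r - l) + \<alpha> * (c * (r - l)) * (r - l) + (c * (r - l))\<^sup>2 * (r - l) / 3"
      unfolding G_def by (simp add: power2_eq_square power3_eq_cube algebra_simps)
    also have "\<dots> = (r - l) * (\<alpha>\<^sup>2 + \<alpha> * \<beta> + \<beta>\<^sup>2) / 3"
      unfolding cr by (simp add: power2_eq_square field_simps)
    finally show ?thesis .
  qed
  ultimately show ?thesis unfolding c_def by simp
qed

definition sqnorm_pwlin :: "nat \<Rightarrow> (nat \<Rightarrow> real) \<Rightarrow> (nat \<Rightarrow> real) \<Rightarrow> real" where
  "sqnorm_pwlin K p d = (\<Sum>k=1..K. (p k - p (k - 1)) * ((d (k - 1))\<^sup>2 + d (k - 1) * d k + (d k)\<^sup>2) / 3)"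

lemma has_integral_pwlin_sq:
  assumes "increasing_upto K p" "1 \<le> K"
  shows "((\<lambda>s. (pwlin K p d s)\<^sup>2) has_integral sqnorm_pwlin K p d) {p 0..p K}"
  unfolding sqnorm_pwlin_def
proof (rule has_integral_cells[OF assms(1) order_refl])
  fix k assume k: "1 \<le> k" "k \<le> K"
  have lt: "p (k - 1) < p k" using increasing_upto_step[OF assms(1) k] .
  show "((\<lambda>s. (pwlin K p d s)\<^sup>2) has_integral
    (p k - p (k - 1)) * ((d (k - 1))\<^sup>2 + d (k - 1) * d k + (d k)\<^sup>2) / 3) {p (k - 1)..p k}"
  proof (rule has_integral_eq[OF _ has_integral_affine_sq[OF lt]])
    fix s assume "s \<in> {p (k - 1)..p k}"
    then show "(d (k - 1) + (s - p (k - 1)) * ((d k - d (k - 1)) / (p k - p (k - 1))))\<^sup>2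
      = (pwlin K p d s)\<^sup>2"
      using pwlin_on_cell[OF assms(1) k, of s d] by simp
  qed
qed

lemma mixed_sq_eq: "(\<alpha>::real)\<^sup>2 + \<alpha> * \<beta> + \<beta>\<^sup>2 = (\<alpha>\<^sup>2 + \<beta>\<^sup>2 + (\<alpha> + \<beta>)\<^sup>2) / 2"
  by (simp add: power2_eq_square field_simps)

lemma mixed_sq_nonneg: "0 \<le> (\<alpha>::real)\<^sup>2 + \<alpha> * \<beta> + \<beta>\<^sup>2"
  unfolding mixed_sq_eq by simp

lemma mixed_sq_eq_0: "(\<alpha>::real)\<^sup>2 + \<alpha> * \<beta> + \<beta>\<^sup>2 = 0 \<Longrightarrow> \<alpha> = 0 \<and> \<beta> = 0"
proof -
  assume h: "\<alpha>\<^sup>2 + \<alpha> * \<beta> + \<beta>\<^sup>2 = 0"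
  have "\<alpha>\<^sup>2 + \<beta>\<^sup>2 + (\<alpha> + \<beta>)\<^sup>2 = 0" using h unfolding mixed_sq_eq by simp
  then have "\<alpha>\<^sup>2 = 0" "\<beta>\<^sup>2 = 0" by (smt (verit) zero_le_power2)+
  then show ?thesis by simp
qed

lemma sqnorm_pwlin_nonneg: "increasing_upto K p \<Longrightarrow> 0 \<le> sqnorm_pwlin K p d"
  unfolding sqnorm_pwlin_def
proof (rule sum_nonneg)
  fix k assume "increasing_upto K p" "k \<in> {1..K}"
  then have "p (k - 1) < p k" using increasing_upto_step by auto
  then show "0 \<le> (p k - p (k - 1)) * ((d (k - 1))\<^sup>2 + d (k - 1) * d k + (d k)\<^sup>2) / 3"
    using mixed_sq_nonneg[of "d (k - 1)" "d k"] by simp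
qed

lemma sqnorm_pwlin_eq_0:
  assumes "increasing_upto K p" "sqnorm_pwlin K p d = 0" "1 \<le> k" "k \<le> K"
  shows "d k = 0"
proof -
  define T where "T = (\<lambda>j. (p j - p (j - 1)) * ((d (j - 1))\<^sup>2 + d (j - 1) * d j + (d j)\<^sup>2) / 3)"
  have nn: "0 \<le> T j" if "j \<in> {1..K}" for j
  proof -
    have "p (j - 1) < p j" using increasing_upto_step assms(1) that by auto
    then show "0 \<le> T j" unfolding T_def using mixed_sq_nonneg[of "d (j - 1)" "d j"] by simp
  qed
  have "sum T {1..K} = 0" using assms(2) unfolding sqnorm_pwlin_def T_def by simp
  then have "\<forall>j\<in>{1..K}. T j = 0" using sum_nonneg_eq_0_iff[of "{1..K}" T] nn by auto
  then have "T k = 0" using assms(3,4) by auto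
  moreover have "p (k - 1) < p k" using increasing_upto_step assms by auto
  ultimately have "(d (k - 1))\<^sup>2 + d (k - 1) * d k + (d k)\<^sup>2 = 0" unfolding T_def by simp
  then show ?thesis using mixed_sq_eq_0 by blast
qed

lemma continuous_on_lebesgue_on:
  fixes f :: "real \<Rightarrow> real"
  assumes "continuous_on {c..d} f"
  shows "integrable (lebesgue_on {c..d}) f" "integral\<^sup>L (lebesgue_on {c..d}) f = integral {c..d} f"
proof -
  have "f absolutely_integrable_on {c..d}" using absolutely_integrable_continuous_real[OF assms] .
  then show i: "integrable (lebesgue_on {c..d}) f"
    unfolding set_integrable_def by (subst integrable_restrict_space) auto
  show "integral\<^sup>L (lebesgue_on {c..d}) f = integral {c..d} f"
    using has_integral_integral_lebesgue_on[OF i] by (simp add: integral_unique)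
qed

lemma pwlin_measurable:
  "increasing_upto K p \<Longrightarrow> 1 \<le> K \<Longrightarrow> pwlin K p e \<in> borel_measurable (lebesgue_on {p 0..p K})"
  by (rule continuous_imp_measurable_on_sets_lebesgue[OF continuous_on_pwlin]) auto

lemma lebesgue_integral_pwlin_sq:
  assumes "increasing_upto K p" "1 \<le> K"
  shows "(\<integral>\<^sup>+ s. ennreal ((pwlin K p d s)\<^sup>2) \<partial>lebesgue_on {p 0..p K}) = ennreal (sqnorm_pwlin K p d)"
    "integral\<^sup>L (lebesgue_on {p 0..p K}) (\<lambda>s. (pwlin K p d s)\<^sup>2) = sqnorm_pwlin K p d"
proof -
  have c: "continuous_on {p 0..p K} (\<lambda>s. (pwlin K p d s)\<^sup>2)"
    by (intro continuous_intros continuous_on_pwlin[OF assms])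
  have i: "integrable (lebesgue_on {p 0..p K}) (\<lambda>s. (pwlin K p d s)\<^sup>2)"
    using continuous_on_lebesgue_on(1)[OF c] .
  have e: "integral\<^sup>L (lebesgue_on {p 0..p K}) (\<lambda>s. (pwlin K p d s)\<^sup>2) = sqnorm_pwlin K p d"
    using continuous_on_lebesgue_on(2)[OF c] has_integral_pwlin_sq[OF assms, of d]
    by (simp add: integral_unique)
  then show "integral\<^sup>L (lebesgue_on {p 0..p K}) (\<lambda>s. (pwlin K p d s)\<^sup>2) = sqnorm_pwlin K p d" .
  show "(\<integral>\<^sup>+ s. ennreal ((pwlin K p d s)\<^sup>2) \<partial>lebesgue_on {p 0..p K}) = ennreal (sqnorm_pwlin K p d)"
    using nn_integral_eq_integral[OF i] e by simp
qed

section \<open>Step densities as push-forwards of Lebesgue measure\<close>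

lemma mesh_increasing: "is_mesh M K \<xi> \<Longrightarrow> increasing_upto K \<xi>"
  unfolding is_mesh_def increasing_upto_def by auto

lemma ext_vec_increasing: "y \<in> xset a b K \<Longrightarrow> increasing_upto K (ext_vec a b K y)"
  unfolding xset_def increasing_upto_def by auto

lemma ext_vec_0[simp]: "ext_vec a b K y 0 = a" by (simp add: ext_vec_def)
lemma ext_vec_K[simp]: "1 \<le> K \<Longrightarrow> ext_vec a b K y K = b" by (simp add: ext_vec_def)

lemma ext_vec_upd:
  "1 \<le> k \<Longrightarrow> k < K \<Longrightarrow> ext_vec a b K (x(k := t)) j = (if j = k then t else ext_vec a b K x j)"
  unfolding ext_vec_def by auto

lemma X_xi_eq_pwlin: "X_xi a b K \<xi> y = pwlin K \<xi> (ext_vec a b K y)"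
  unfolding X_xi_def pwlin_def by simp

lemma sum_indicator_cells:
  assumes "increasing_upto K e" "1 \<le> k" "k \<le> K" "e (k - 1) < t" "t \<le> e k"
  shows "(\<Sum>j=1..K. d j / (e j - e (j - 1)) * indicator {e (j - 1)<..e j} t) = d k / (e k - e (k - 1))"
proof -
  have "(\<Sum>j=1..K. d j / (e j - e (j - 1)) * indicator {e (j - 1)<..e j} t) =
        (\<Sum>j\<in>{k}. d j / (e j - e (j - 1)) * indicator {e (j - 1)<..e j} t)"
  proof (rule sum.mono_neutral_right)
    show "\<forall>j\<in>{1..K} - {k}. d j / (e j - e (j - 1)) * indicator {e (j - 1)<..e j} t = 0"
    proof
      fix j assume j: "j \<in> {1..K} - {k}"
      have "t \<notin> {e (j - 1)<..e j}"
      proof (cases "j < k")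
        case True
        then have "e j \<le> e (k - 1)" using increasing_upto_le[OF assms(1), of j "k-1"] assms by simp
        then show ?thesis using assms by auto
      next
        case False
        then have "k \<le> j - 1" using j by auto
        moreover have "j - 1 \<le> K" using j by auto
        ultimately have "e k \<le> e (j - 1)" using increasing_upto_le[OF assms(1), of k "j-1"] by simp
        then show ?thesis using assms by auto
      qed
      then show "d j / (e j - e (j - 1)) * indicator {e (j - 1)<..e j} t = 0" by simp
    qed
  qed (use assms in auto)
  then show ?thesis using assms by simp
qed

definition step_density :: "nat \<Rightarrow> (nat \<Rightarrow> real) \<Rightarrow> (nat \<Rightarrow> real) \<Rightarrow> real \<Rightarrow> real" where
  "step_density K p e t =
    (\<Sum>j=1..K. (p j - p (j - 1)) / (e j - e (j - 1)) * indicator {e (j - 1)<..e j} t)"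

lemma u_xi_eq_step_density: "u_xi a b K \<xi> y = step_density K \<xi> (ext_vec a b K y)"
  unfolding u_xi_def step_density_def mesh_delta_def by simp

lemma step_density_nonneg:
  assumes "increasing_upto K p" "increasing_upto K e"
  shows "0 \<le> step_density K p e t"
  unfolding step_density_def
proof (rule sum_nonneg)
  fix j assume "j \<in> {1..K}"
  then have "p (j - 1) < p j" "e (j - 1) < e j" using increasing_upto_step assms by auto
  then show "0 \<le> (p j - p (j - 1)) / (e j - e (j - 1)) * indicator {e (j - 1)<..e j} t" by simp
qed

lemma step_density_measurable[measurable]: "step_density K p e \<in> borel_measurable borel"
  unfolding step_density_def by measurable

lemma step_density_has_integral:
  assumes "increasing_upto K p" "increasing_upto K e" "1 \<le> K" "e 0 \<le> t" "t \<le> e K"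
  shows "(step_density K p e has_integral (pwlin K e p t - p 0)) {e 0..t}"
proof -
  have "(step_density K p e has_integral (pwlin K e p t - pwlin K e p (e 0))) {e 0..t}"
  proof (rule fundamental_theorem_of_calculus_interior_strong[where S = "e ` {0..K}"])
    show "continuous_on {e 0..t} (pwlin K e p)"
      by (rule continuous_on_subset[OF continuous_on_pwlin[OF assms(2,3)]]) (use assms in auto)
    fix x assume x: "x \<in> {e 0<..<t} - e ` {0..K}"
    then obtain k where k: "1 \<le> k" "k \<le> K" "e (k - 1) \<le> x" "x \<le> e k"
      using exists_cell[OF assms(2,3), of x] assms by auto
    have nn: "x \<noteq> e (k - 1)" "x \<noteq> e k" using x k by auto
    then have k': "e (k - 1) < x" "x < e k" using k by auto
    have "(pwlin K e p has_real_derivative (p k - p (k - 1)) / (e k - e (k - 1))) (at x)"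
      using pwlin_has_real_derivative[OF assms(2) k(1,2) k'] .
    moreover have "step_density K p e x = (p k - p (k - 1)) / (e k - e (k - 1))"
      unfolding step_density_def using sum_indicator_cells[OF assms(2) k(1,2) k'(1)] k' by simp
    ultimately show "(pwlin K e p has_vector_derivative step_density K p e x) (at x)"
      by (simp add: has_real_derivative_iff_has_vector_derivative)
  qed (use assms in auto)
  moreover have "pwlin K e p (e 0) = p 0" using pwlin_node[OF assms(2,3), of 0] by simp
  ultimately show ?thesis by simp
qed

lemma emeasure_step_density_atMost:
  assumes "increasing_upto K p" "increasing_upto K e" "1 \<le> K"
  shows "emeasure (density lborel (\<lambda>y. ennreal (step_density K p e y) * indicator {e 0..e K} y)) {..t} =
    ennreal (if t < e 0 then 0 else if t \<le> e K then pwlin K e p t - p 0 else p K - p 0)"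
proof -
  have "emeasure (density lborel (\<lambda>y. ennreal (step_density K p e y) * indicator {e 0..e K} y)) {..t} =
     (\<integral>\<^sup>+ y. ennreal (step_density K p e y) * indicator {e 0..e K} y * indicator {..t} y \<partial>lborel)"
    by (rule emeasure_density) auto
  also have "\<dots> = (\<integral>\<^sup>+ y. ennreal (step_density K p e y) * indicator {e 0..min t (e K)} y \<partial>lborel)"
    by (rule nn_integral_cong) (auto simp: indicator_def)
  also have "\<dots> = ennreal (if t < e 0 then 0 else if t \<le> e K then pwlin K e p t - p 0 else p K - p 0)"
  proof (cases "t < e 0")
    case True
    then have "{e 0..min t (e K)} = {}" by auto
    then show ?thesis using True by simp
  next
    case False
    have "e 0 \<le> min t (e K)" using False increasing_upto_le[OF assms(2), of 0 K] by simp
    have "(step_density K p e has_integral (pwlin K e p (min t (e K)) - p 0)) {e 0..min t (e K)}"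
      by (rule step_density_has_integral[OF assms]) (use \<open>e 0 \<le> min t (e K)\<close> in auto)
    then have "(\<integral>\<^sup>+ y. ennreal (step_density K p e y) * indicator {e 0..min t (e K)} y \<partial>lborel)
        = ennreal (pwlin K e p (min t (e K)) - p 0)"
      by (intro nn_integral_has_integral_lebesgue') (use step_density_nonneg[OF assms(1,2)] in auto)
    moreover have "pwlin K e p (e K) = p K" using pwlin_node[OF assms(2,3), of K] by simp
    ultimately show ?thesis using False by (auto simp: min_def)
  qed
  finally show ?thesis .
qed

lemma measure_lebesgue_Icc: "c \<le> d \<Longrightarrow> measure lebesgue {c..d::real} = d - c"
  by (simp add: measure_completion)

lemma pwlin_le_iff:
  assumes incp: "increasing_upto K p" and ince: "increasing_upto K e" and K1: "1 \<le> K"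
    and s: "s \<in> {p 0..p K}" and t: "t \<in> {e 0..e K}"
  shows "pwlin K p e s \<le> t \<longleftrightarrow> s \<le> pwlin K e p t"
proof
  assume "pwlin K p e s \<le> t"
  then have "pwlin K e p (pwlin K p e s) \<le> pwlin K e p t"
    using pwlin_mono[OF ince incp K1] pwlin_range[OF incp ince K1] s t by auto
  then show "s \<le> pwlin K e p t" using pwlin_inverse[OF incp ince K1] s by simp
next
  assume "s \<le> pwlin K e p t"
  then have "pwlin K p e s \<le> pwlin K p e (pwlin K e p t)"
    using pwlin_mono[OF incp ince K1] pwlin_range[OF ince incp K1] s t by auto
  then show "pwlin K p e s \<le> t" using pwlin_inverse[OF ince incp K1] t by simp
qed

lemma measure_distr_pwlin_atMost:
  assumes incp: "increasing_upto K p" and ince: "increasing_upto K e" and K1: "1 \<le> K"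
  shows "measure (distr (lebesgue_on {p 0..p K}) borel (pwlin K p e)) {..t} =
    (if t < e 0 then 0 else if t \<le> e K then pwlin K e p t - p 0 else p K - p 0)"
proof -
  let ?S = "{p 0..p K}"
  have measure_S: "measure (lebesgue_on ?S) {p 0..q} = q - p 0" if "q \<in> ?S" for q
    using that by (subst measure_restrict_space) (auto simp: measure_lebesgue_Icc)
  have range: "pwlin K p e s \<in> {e 0..e K}" if "s \<in> ?S" for s
    using pwlin_range[OF incp ince K1] that by auto
  have "measure (distr (lebesgue_on ?S) borel (pwlin K p e)) {..t}
      = measure (lebesgue_on ?S) (pwlin K p e -` {..t} \<inter> ?S)"
    by (subst measure_distr[OF pwlin_measurable[OF incp K1]]) auto
  also have "\<dots> = (if t < e 0 then 0 else if t \<le> e K then pwlin K e p t - p 0 else p K - p 0)"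
  proof -
    consider "t < e 0" | "t \<in> {e 0..e K}" | "e K < t" by force
    then show ?thesis
    proof cases
      case 1
      then have "pwlin K p e -` {..t} \<inter> ?S = {}" using range by force
      then show ?thesis using 1 by simp
    next
      case 2
      then have "pwlin K p e -` {..t} \<inter> ?S = {p 0..pwlin K e p t}"
        using pwlin_le_iff[OF incp ince K1 _ 2] pwlin_range[OF ince incp K1, of t] by auto
      then show ?thesis using 2 measure_S pwlin_range[OF ince incp K1, of t] by auto
    next
      case 3
      then have "pwlin K p e -` {..t} \<inter> ?S = {p 0..p K}" using range by force
      then show ?thesis
        using 3 measure_S[of "p K"] increasing_upto_le[OF incp, of 0 K] increasing_upto_le[OF ince, of 0 K]
        by auto
    qed
  qed
  finally show ?thesis .
qed

lemma distr_pwlin_eq_step_density: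
  assumes "increasing_upto K p" "increasing_upto K e" "1 \<le> K"
  shows "distr (lebesgue_on {p 0..p K}) borel (pwlin K p e) =
         density lborel (\<lambda>y. ennreal (step_density K p e y) * indicator {e 0..e K} y)"
proof (rule cdf_unique')
  let ?S = "{p 0..p K}"
  have pK: "p 0 \<le> p K" using increasing_upto_le[OF assms(1), of 0 K] by simp
  have eK: "e 0 \<le> e K" using increasing_upto_le[OF assms(2), of 0 K] by simp
  show "finite_borel_measure (distr (lebesgue_on ?S) borel (pwlin K p e))"
  proof -
    interpret finite_measure "lebesgue_on ?S"
      by (rule finite_measure_lebesgue_on) (metis cbox_interval lmeasurable_cbox)
    have "finite_measure (distr (lebesgue_on ?S) borel (pwlin K p e))"
      by (rule finite_measure_distr[OF pwlin_measurable[OF assms(1,3)]])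
    then show ?thesis unfolding finite_borel_measure_def finite_borel_measure_axioms_def by simp
  qed
  let ?D = "density lborel (\<lambda>y. ennreal (step_density K p e y) * indicator {e 0..e K} y)"
  have "emeasure ?D UNIV
      = (\<integral>\<^sup>+ y. ennreal (step_density K p e y) * indicator {e 0..e K} y * indicator UNIV y \<partial>lborel)"
    by (rule emeasure_density) auto
  also have "\<dots> = (\<integral>\<^sup>+ y. ennreal (step_density K p e y) * indicator {e 0..e K} y \<partial>lborel)" by simp
  also have "\<dots> = ennreal (pwlin K e p (e K) - p 0)"
    by (intro nn_integral_has_integral_lebesgue' step_density_has_integral[OF assms])
       (use step_density_nonneg[OF assms(1,2)] eK in auto)
  finally have fin: "emeasure ?D UNIV \<noteq> \<infinity>" by simp
  show "finite_borel_measure ?D"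
    unfolding finite_borel_measure_def finite_borel_measure_axioms_def
    using fin by (auto intro!: finite_measureI)
  show "cdf (distr (lebesgue_on ?S) borel (pwlin K p e)) = cdf ?D"
  proof
    fix t
    have nn: "0 \<le> (if t < e 0 then 0 else if t \<le> e K then pwlin K e p t - p 0 else p K - p 0)"
      using pwlin_range[OF assms(2,1,3), of t] pK by auto
    have "cdf ?D t = enn2real (emeasure ?D {..t})" unfolding cdf_def measure_def ..
    also have "\<dots> = (if t < e 0 then 0 else if t \<le> e K then pwlin K e p t - p 0 else p K - p 0)"
      using emeasure_step_density_atMost[OF assms, of t] nn by simp
    finally show "cdf (distr (lebesgue_on ?S) borel (pwlin K p e)) t = cdf ?D t"
      unfolding cdf_def using measure_distr_pwlin_atMost[OF assms, of t] by simp
  qed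
qed

lemma dens_meas_step_density:
  assumes "increasing_upto K p" "1 \<le> K" "increasing_upto K e" "e 0 = a" "e K = b"
  shows "dens_meas a b (step_density K p e) = distr (lebesgue_on {p 0..p K}) borel (pwlin K p e)"
  unfolding dens_meas_def using distr_pwlin_eq_step_density[OF assms(1,3,2)] assms(4,5) by simp

section \<open>The Wasserstein distance between step densities\<close>

lemma borel_measurable_fst: "fst \<in> borel_measurable (borel :: (real \<times> real) measure)"
  by (rule borel_measurable_continuous_onI) (intro continuous_intros)
lemma borel_measurable_snd: "snd \<in> borel_measurable (borel :: (real \<times> real) measure)"
  by (rule borel_measurable_continuous_onI) (intro continuous_intros)

lemma finite_measure_coupling:
  assumes "\<pi> \<in> couplings \<mu> \<nu>" "finite_measure \<mu>"
  shows "finite_measure \<pi>"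
proof (rule finite_measureI)
  have sets: "sets \<pi> = sets borel" and marginal: "distr \<pi> borel fst = \<mu>"
    using assms(1) unfolding couplings_def by auto
  have "fst \<in> borel_measurable \<pi>"
    by (subst measurable_cong_sets[OF sets refl]) (rule borel_measurable_fst)
  then have "emeasure \<pi> (space \<pi>) = emeasure (distr \<pi> borel fst) UNIV"
    using sets_eq_imp_space_eq[OF sets] by (subst emeasure_distr) auto
  also have "\<dots> = emeasure \<mu> (space \<mu>)" by (simp add: marginal[symmetric])
  finally show "emeasure \<pi> (space \<pi>) \<noteq> \<infinity>" using finite_measure.emeasure_finite[OF assms(2)] by simp
qed

lemma integral_marginal:
  fixes \<pi> :: "(real \<times> real) measure" and pr :: "real \<times> real \<Rightarrow> real" and h :: "real \<Rightarrow> real"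
  assumes sets: "sets \<pi> = sets borel" and pr: "pr \<in> borel_measurable borel"
    and marginal: "distr \<pi> borel pr = distr L borel X"
    and X: "X \<in> borel_measurable L" and h: "h \<in> borel_measurable borel"
  shows "integral\<^sup>L \<pi> (\<lambda>q. h (pr q)) = integral\<^sup>L L (\<lambda>s. h (X s))"
proof -
  have "pr \<in> borel_measurable \<pi>" by (subst measurable_cong_sets[OF sets refl]) (rule pr)
  from integral_distr[OF this h]
  have "integral\<^sup>L \<pi> (\<lambda>q. h (pr q)) = integral\<^sup>L (distr \<pi> borel pr) h" by simp
  also have "\<dots> = integral\<^sup>L L (\<lambda>s. h (X s))" unfolding marginal by (rule integral_distr[OF X h])
  finally show ?thesis .
qed

lemma ennreal_integral_le_nn_integral:
  assumes "integrable M h" "\<And>x. h x \<le> g x"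
  shows "ennreal (integral\<^sup>L M h) \<le> (\<integral>\<^sup>+ x. ennreal (g x) \<partial>M)"
proof -
  have "integral\<^sup>L M h \<le> integral\<^sup>L M (\<lambda>x. max (h x) 0)"
    using assms(1) by (intro integral_mono) auto
  then have "ennreal (integral\<^sup>L M h) \<le> ennreal (integral\<^sup>L M (\<lambda>x. max (h x) 0))"
    by (rule ennreal_leI)
  also have "\<dots> = (\<integral>\<^sup>+ x. ennreal (max (h x) 0) \<partial>M)"
    using assms(1) by (intro nn_integral_eq_integral[symmetric]) auto
  also have "\<dots> \<le> (\<integral>\<^sup>+ x. ennreal (g x) \<partial>M)"
    using assms(2) by (intro nn_integral_mono) (auto simp: max_def intro: ennreal_leI)
  finally show ?thesis .
qed

locale two_step_densities =
  fixes K :: nat and p ey ez :: "nat \<Rightarrow> real" and a b :: real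
  assumes incp: "increasing_upto K p" and K1: "1 \<le> K"
    and incy: "increasing_upto K ey" and incz: "increasing_upto K ez"
    and y0: "ey 0 = a" and yK: "ey K = b" and z0: "ez 0 = a" and zK: "ez K = b"
begin

lemma monotone_coupling:
  defines "\<pi> \<equiv> distr (lebesgue_on {p 0..p K}) borel (\<lambda>s. (pwlin K p ey s, pwlin K p ez s))"
  shows "\<pi> \<in> couplings (dens_meas a b (step_density K p ey)) (dens_meas a b (step_density K p ez))"
    "(\<integral>\<^sup>+ q. ennreal ((fst q - snd q)\<^sup>2) \<partial>\<pi>) = ennreal (sqnorm_pwlin K p (\<lambda>j. ey j - ez j))"
proof -
  let ?L = "lebesgue_on {p 0..p K}"
  have mY: "pwlin K p ey \<in> borel_measurable ?L" and mZ: "pwlin K p ez \<in> borel_measurable ?L"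
    using pwlin_measurable[OF incp K1] by auto
  have mYZ: "(\<lambda>s. (pwlin K p ey s, pwlin K p ez s)) \<in> borel_measurable ?L"
    using borel_measurable_Pair[OF mY mZ] .
  have "distr \<pi> borel fst = distr ?L borel (fst \<circ> (\<lambda>s. (pwlin K p ey s, pwlin K p ez s)))"
    unfolding \<pi>_def by (rule distr_distr[OF borel_measurable_fst mYZ])
  also have "\<dots> = dens_meas a b (step_density K p ey)"
    using dens_meas_step_density[OF incp K1 incy y0 yK] by (simp add: comp_def)
  finally have fst: "distr \<pi> borel fst = dens_meas a b (step_density K p ey)" .
  have "distr \<pi> borel snd = distr ?L borel (snd \<circ> (\<lambda>s. (pwlin K p ey s, pwlin K p ez s)))"
    unfolding \<pi>_def by (rule distr_distr[OF borel_measurable_snd mYZ])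
  also have "\<dots> = dens_meas a b (step_density K p ez)"
    using dens_meas_step_density[OF incp K1 incz z0 zK] by (simp add: comp_def)
  finally have snd: "distr \<pi> borel snd = dens_meas a b (step_density K p ez)" .
  show "\<pi> \<in> couplings (dens_meas a b (step_density K p ey)) (dens_meas a b (step_density K p ez))"
    unfolding couplings_def using fst snd by (simp add: \<pi>_def)
  have "(\<integral>\<^sup>+ q. ennreal ((fst q - snd q)\<^sup>2) \<partial>\<pi>)
      = (\<integral>\<^sup>+ s. ennreal ((pwlin K p ey s - pwlin K p ez s)\<^sup>2) \<partial>?L)"
    unfolding \<pi>_def
    by (subst nn_integral_distr[OF mYZ])
      (auto intro!: borel_measurable_continuous_onI continuous_intros)
  also have "\<dots> = ennreal (sqnorm_pwlin K p (\<lambda>j. ey j - ez j))"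
    using lebesgue_integral_pwlin_sq(1)[OF incp K1] by (simp add: pwlin_diff)
  finally show "(\<integral>\<^sup>+ q. ennreal ((fst q - snd q)\<^sup>2) \<partial>\<pi>)
    = ennreal (sqnorm_pwlin K p (\<lambda>j. ey j - ez j))" .
qed

text \<open>Kantorovich potentials certifying that the monotone coupling is optimal: \<open>T = Z \<circ> F\<close> is the
  monotone transport map, \<open>f x + g y \<le> (x - y)\<^sup>2\<close> because \<open>\<Phi>\<close> is convex with derivative \<open>T\<close>, and
  equality holds on the graph of \<open>T\<close>. Clamping to \<open>[a, b]\<close> makes the potentials bounded on the line.\<close>

abbreviation "X \<equiv> pwlin K p ey"
abbreviation "Z \<equiv> pwlin K p ez"
abbreviation "F \<equiv> pwlin K ey p"
abbreviation "G \<equiv> pwlin K ez p"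
definition "T = (\<lambda>x. Z (F x))"
definition "\<Phi> = (\<lambda>x. integral {a..x} T)"
definition "f = (\<lambda>x. x\<^sup>2 - 2 * \<Phi> x)"
definition "g = (\<lambda>y. (X (G y) - y)\<^sup>2 - f (X (G y)))"

lemma ab: "a \<le> b" using increasing_upto_le[OF incy, of 0 K] y0 yK by simp

lemma F_range: "x \<in> {a..b} \<Longrightarrow> F x \<in> {p 0..p K}"
  using pwlin_range[OF incy incp K1, of x] y0 yK by auto
lemma G_range: "x \<in> {a..b} \<Longrightarrow> G x \<in> {p 0..p K}"
  using pwlin_range[OF incz incp K1, of x] z0 zK by auto
lemma X_range: "s \<in> {p 0..p K} \<Longrightarrow> X s \<in> {a..b}"
  using pwlin_range[OF incp incy K1, of s] y0 yK by auto
lemma Z_range: "s \<in> {p 0..p K} \<Longrightarrow> Z s \<in> {a..b}"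
  using pwlin_range[OF incp incz K1, of s] z0 zK by auto
lemma F_X: "s \<in> {p 0..p K} \<Longrightarrow> F (X s) = s"
  using pwlin_inverse[OF incp incy K1, of s] by auto
lemma Z_G: "x \<in> {a..b} \<Longrightarrow> Z (G x) = x"
  using pwlin_inverse[OF incz incp K1, of x] z0 zK by auto
lemma G_Z: "s \<in> {p 0..p K} \<Longrightarrow> G (Z s) = s"
  using pwlin_inverse[OF incp incz K1, of s] by auto

lemma continuous_X: "continuous_on {p 0..p K} X" using continuous_on_pwlin[OF incp K1] .
lemma continuous_Z: "continuous_on {p 0..p K} Z" using continuous_on_pwlin[OF incp K1] .
lemma continuous_F: "continuous_on {a..b} F" using continuous_on_pwlin[OF incy K1] y0 yK by simp
lemma continuous_G: "continuous_on {a..b} G" using continuous_on_pwlin[OF incz K1] z0 zK by simp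

lemma continuous_T: "continuous_on {a..b} T"
  unfolding T_def by (rule continuous_on_compose2[OF continuous_Z continuous_F]) (use F_range in auto)

lemma T_mono: "x \<in> {a..b} \<Longrightarrow> x' \<in> {a..b} \<Longrightarrow> x \<le> x' \<Longrightarrow> T x \<le> T x'"
proof -
  assume x: "x \<in> {a..b}" "x' \<in> {a..b}" "x \<le> x'"
  have "F x \<le> F x'" using pwlin_mono[OF incy incp K1, of x x'] x y0 yK by auto
  then show "T x \<le> T x'"
    unfolding T_def using pwlin_mono[OF incp incz K1, of "F x" "F x'"] F_range x by auto
qed

lemma integrable_T: "T integrable_on {c..d}" if "{c..d} \<subseteq> {a..b}" for c d
  using integrable_on_subinterval[OF integrable_continuous_interval[OF continuous_T] that] .

lemma Phi_above_tangent:
  assumes x: "x \<in> {a..b}" "x' \<in> {a..b}"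
  shows "T x' * (x - x') \<le> \<Phi> x - \<Phi> x'"
proof (cases "x' \<le> x")
  case True
  have "integral {a..x'} T + integral {x'..x} T = integral {a..x} T"
    by (rule Henstock_Kurzweil_Integration.integral_combine) (use x True integrable_T in auto)
  then have e: "\<Phi> x - \<Phi> x' = integral {x'..x} T" unfolding \<Phi>_def by simp
  have "integral {x'..x} (\<lambda>t. T x') \<le> integral {x'..x} T"
    by (rule integral_le) (use x True integrable_T T_mono in auto)
  then show ?thesis using e True by (simp add: mult.commute)
next
  case False
  have "integral {a..x} T + integral {x..x'} T = integral {a..x'} T"
    by (rule Henstock_Kurzweil_Integration.integral_combine) (use x False integrable_T in auto)
  then have e: "\<Phi> x' - \<Phi> x = integral {x..x'} T" unfolding \<Phi>_def by simp
  have "integral {x..x'} T \<le> integral {x..x'} (\<lambda>t. T x')"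
    by (rule integral_le) (use x False integrable_T T_mono in auto)
  then have "\<Phi> x' - \<Phi> x \<le> T x' * (x' - x)" using e False by (simp add: mult.commute)
  then show ?thesis by (simp add: algebra_simps)
qed

lemma potentials_le_sq_dist:
  assumes x: "x \<in> {a..b}" and y: "y \<in> {a..b}"
  shows "f x + g y \<le> (x - y)\<^sup>2"
proof -
  define q where "q = G y"
  have q: "q \<in> {p 0..p K}" using G_range[OF y] q_def by simp
  define x' where "x' = X q"
  have x': "x' \<in> {a..b}" using X_range[OF q] x'_def by simp
  have Tx': "T x' = y" unfolding T_def x'_def using F_X[OF q] Z_G[OF y] q_def by simp
  have c: "y * (x - x') \<le> \<Phi> x - \<Phi> x'" using Phi_above_tangent[OF x x'] Tx' by simp
  have "f x + g y = x\<^sup>2 - 2 * \<Phi> x + (x' - y)\<^sup>2 - x'\<^sup>2 + 2 * \<Phi> x'"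
    unfolding f_def g_def x'_def q_def by simp
  also have "\<dots> \<le> (x - y)\<^sup>2" using c by (simp add: power2_eq_square algebra_simps)
  finally show ?thesis .
qed

lemma potentials_eq_on_transport:
  assumes s: "s \<in> {p 0..p K}"
  shows "f (X s) + g (Z s) = (X s - Z s)\<^sup>2"
  unfolding g_def using G_Z[OF s] by simp

lemma continuous_Phi: "continuous_on {a..b} \<Phi>"
  unfolding \<Phi>_def
  by (rule indefinite_integral_continuous_1[OF integrable_continuous_interval[OF continuous_T]])

lemma continuous_f: "continuous_on {a..b} f"
  unfolding f_def by (intro continuous_intros continuous_Phi)

lemma continuous_g: "continuous_on {a..b} g"
proof -
  have cXG: "continuous_on {a..b} (\<lambda>y. X (G y))"
    by (rule continuous_on_compose2[OF continuous_X continuous_G]) (use G_range in auto)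
  have cfXG: "continuous_on {a..b} (\<lambda>y. f (X (G y)))"
    by (rule continuous_on_compose2[OF continuous_f cXG]) (use G_range X_range in auto)
  show ?thesis unfolding g_def by (intro continuous_intros cXG cfXG)
qed

lemma clamp_range: "clamp a b x \<in> {a..b}"
  using clamp_in_interval[of a b x] ab by simp

lemma clamp_id: "x \<in> {a..b} \<Longrightarrow> clamp a b x = x"
  by (simp add: clamp_cancel_cbox)

lemma clamp_sq_dist_le: "(clamp a b x - clamp a b y)\<^sup>2 \<le> (x - y)\<^sup>2"
  using dist_clamps_le_dist_args[of a b x y] unfolding dist_real_def
  by (metis abs_ge_zero power2_abs power_mono)

lemma continuous_clamped:
  fixes h :: "real \<Rightarrow> real"
  assumes "continuous_on {a..b} h"
  shows "continuous_on UNIV (\<lambda>x. h (clamp a b x))"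
  using clamp_continuous_on[of a b h] assms by simp

lemma bounded_clamped:
  fixes h :: "real \<Rightarrow> real"
  assumes "continuous_on {a..b} h"
  shows "\<exists>B. \<forall>x. \<bar>h (clamp a b x)\<bar> \<le> B"
proof -
  have "bounded (h ` {a..b})" by (rule compact_imp_bounded[OF compact_continuous_image[OF assms]]) simp
  then have "bounded (range (\<lambda>x. h (clamp a b x)))" using clamp_bounded[of h a b] by simp
  then show ?thesis unfolding bounded_iff by auto
qed

lemma integral_potentials_coupling:
  assumes pi: "\<pi> \<in> couplings (dens_meas a b (step_density K p ey)) (dens_meas a b (step_density K p ez))"
  defines "h \<equiv> \<lambda>q. f (clamp a b (fst q)) + g (clamp a b (snd q))"
  shows "integrable \<pi> h" "integral\<^sup>L \<pi> h = sqnorm_pwlin K p (\<lambda>j. ey j - ez j)"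
proof -
  let ?L = "lebesgue_on {p 0..p K}"
  have sets: "sets \<pi> = sets borel" and fst: "distr \<pi> borel fst = distr ?L borel X"
    and snd: "distr \<pi> borel snd = distr ?L borel Z"
    using pi dens_meas_step_density[OF incp K1 incy y0 yK] dens_meas_step_density[OF incp K1 incz z0 zK]
    unfolding couplings_def by auto
  interpret L: finite_measure ?L
    by (rule finite_measure_lebesgue_on) (metis cbox_interval lmeasurable_cbox)
  have mX: "X \<in> borel_measurable ?L" and mZ: "Z \<in> borel_measurable ?L"
    using pwlin_measurable[OF incp K1] by auto
  interpret P: finite_measure \<pi>
    using finite_measure_coupling[OF pi] L.finite_measure_distr[OF mX]
      dens_meas_step_density[OF incp K1 incy y0 yK] by simp
  define fc where "fc = (\<lambda>x. f (clamp a b x))"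
  define gc where "gc = (\<lambda>x. g (clamp a b x))"
  have mfc: "fc \<in> borel_measurable borel" and mgc: "gc \<in> borel_measurable borel"
    unfolding fc_def gc_def
    by (rule borel_measurable_continuous_onI continuous_clamped continuous_f continuous_g)+
  obtain Bf where Bf: "\<And>x. \<bar>fc x\<bar> \<le> Bf" using bounded_clamped[OF continuous_f] unfolding fc_def by blast
  obtain Bg where Bg: "\<And>x. \<bar>gc x\<bar> \<le> Bg" using bounded_clamped[OF continuous_g] unfolding gc_def by blast
  have mfst: "fst \<in> borel_measurable \<pi>" and msnd: "snd \<in> borel_measurable \<pi>"
    by (subst measurable_cong_sets[OF sets refl], rule borel_measurable_fst borel_measurable_snd)+
  have i1: "integrable \<pi> (\<lambda>q. fc (fst q))"
    by (rule P.integrable_const_bound[where B = Bf]) (use Bf measurable_compose[OF mfst mfc] in auto)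
  have i2: "integrable \<pi> (\<lambda>q. gc (snd q))"
    by (rule P.integrable_const_bound[where B = Bg]) (use Bg measurable_compose[OF msnd mgc] in auto)
  have h: "h = (\<lambda>q. fc (fst q) + gc (snd q))" unfolding h_def fc_def gc_def ..
  show "integrable \<pi> h" unfolding h using i1 i2 by simp
  have cfX: "continuous_on {p 0..p K} (\<lambda>s. f (X s))"
    by (rule continuous_on_compose2[OF continuous_f continuous_X]) (use X_range in auto)
  have cgZ: "continuous_on {p 0..p K} (\<lambda>s. g (Z s))"
    by (rule continuous_on_compose2[OF continuous_g continuous_Z]) (use Z_range in auto)
  have "integral\<^sup>L \<pi> h = integral\<^sup>L ?L (\<lambda>s. fc (X s)) + integral\<^sup>L ?L (\<lambda>s. gc (Z s))"
    unfolding h using i1 i2 integral_marginal[OF sets borel_measurable_fst fst mX mfc]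
      integral_marginal[OF sets borel_measurable_snd snd mZ mgc] by simp
  also have "\<dots> = integral\<^sup>L ?L (\<lambda>s. f (X s)) + integral\<^sup>L ?L (\<lambda>s. g (Z s))"
  proof -
    have "integral\<^sup>L ?L (\<lambda>s. fc (X s)) = integral\<^sup>L ?L (\<lambda>s. f (X s))"
      by (rule Bochner_Integration.integral_cong) (use clamp_id[OF X_range] in \<open>auto simp: fc_def\<close>)
    moreover have "integral\<^sup>L ?L (\<lambda>s. gc (Z s)) = integral\<^sup>L ?L (\<lambda>s. g (Z s))"
      by (rule Bochner_Integration.integral_cong) (use clamp_id[OF Z_range] in \<open>auto simp: gc_def\<close>)
    ultimately show ?thesis by simp
  qed
  also have "\<dots> = integral\<^sup>L ?L (\<lambda>s. f (X s) + g (Z s))"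
    using continuous_on_lebesgue_on(1)[OF cfX] continuous_on_lebesgue_on(1)[OF cgZ] by simp
  also have "\<dots> = integral\<^sup>L ?L (\<lambda>s. (pwlin K p (\<lambda>j. ey j - ez j) s)\<^sup>2)"
    by (rule Bochner_Integration.integral_cong)
      (auto simp: potentials_eq_on_transport pwlin_diff[symmetric])
  also have "\<dots> = sqnorm_pwlin K p (\<lambda>j. ey j - ez j)" using lebesgue_integral_pwlin_sq(2)[OF incp K1] .
  finally show "integral\<^sup>L \<pi> h = sqnorm_pwlin K p (\<lambda>j. ey j - ez j)" .
qed

lemma sqnorm_pwlin_le_coupling_cost:
  assumes pi: "\<pi> \<in> couplings (dens_meas a b (step_density K p ey)) (dens_meas a b (step_density K p ez))"
  shows "ennreal (sqnorm_pwlin K p (\<lambda>j. ey j - ez j)) \<le> (\<integral>\<^sup>+ q. ennreal ((fst q - snd q)\<^sup>2) \<partial>\<pi>)"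
proof -
  let ?h = "\<lambda>q. f (clamp a b (fst q)) + g (clamp a b (snd q))"
  have le: "?h q \<le> (fst q - snd q)\<^sup>2" for q
  proof -
    have "?h q \<le> (clamp a b (fst q) - clamp a b (snd q))\<^sup>2"
      using potentials_le_sq_dist[OF clamp_range clamp_range] .
    also have "\<dots> \<le> (fst q - snd q)\<^sup>2" using clamp_sq_dist_le .
    finally show ?thesis .
  qed
  have "ennreal (integral\<^sup>L \<pi> ?h) \<le> (\<integral>\<^sup>+ q. ennreal ((fst q - snd q)\<^sup>2) \<partial>\<pi>)"
    by (rule ennreal_integral_le_nn_integral[OF integral_potentials_coupling(1)[OF pi] le])
  then show ?thesis unfolding integral_potentials_coupling(2)[OF pi] .
qed

lemma W2_step_density_sq:
  "(W2 a b (step_density K p ey) (step_density K p ez))\<^sup>2 = sqnorm_pwlin K p (\<lambda>j. ey j - ez j)"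
proof -
  let ?I = "INF \<pi> \<in> couplings (dens_meas a b (step_density K p ey)) (dens_meas a b (step_density K p ez)).
       \<integral>\<^sup>+ q. ennreal ((fst q - snd q)\<^sup>2) \<partial>\<pi>"
  have up: "?I \<le> ennreal (sqnorm_pwlin K p (\<lambda>j. ey j - ez j))"
    using INF_lower[OF monotone_coupling(1), of "\<lambda>\<pi>. \<integral>\<^sup>+ q. ennreal ((fst q - snd q)\<^sup>2) \<partial>\<pi>"]
    by (simp add: monotone_coupling(2))
  have lo: "ennreal (sqnorm_pwlin K p (\<lambda>j. ey j - ez j)) \<le> ?I"
    by (rule INF_greatest) (rule sqnorm_pwlin_le_coupling_cost)
  have "?I = ennreal (sqnorm_pwlin K p (\<lambda>j. ey j - ez j))" using up lo by (rule antisym)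
  moreover have "0 \<le> sqnorm_pwlin K p (\<lambda>j. ey j - ez j)" using sqnorm_pwlin_nonneg[OF incp] .
  ultimately show ?thesis unfolding W2_def by simp
qed

end

lemma W2_u_xi_sq:
  assumes "increasing_upto K \<xi>" "1 \<le> K" and y: "y \<in> xset a b K" and z: "z \<in> xset a b K"
  shows "(W2 a b (u_xi a b K \<xi> y) (u_xi a b K \<xi> z))\<^sup>2
    = sqnorm_pwlin K \<xi> (\<lambda>j. ext_vec a b K y j - ext_vec a b K z j)"
proof -
  interpret two_step_densities K \<xi> "ext_vec a b K y" "ext_vec a b K z" a b
    using assms ext_vec_increasing[OF y] ext_vec_increasing[OF z] by unfold_locales auto
  show ?thesis unfolding u_xi_eq_step_density using W2_step_density_sq .
qed

section \<open>The energy of a step density\<close>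

lemma has_integral_affine_comp:
  fixes V :: "real \<Rightarrow> real"
  assumes V: "continuous_on {\<alpha>..\<beta>} V" and "l < r" "\<alpha> < \<beta>"
  shows "((\<lambda>s. V (\<alpha> + (s - l) * ((\<beta> - \<alpha>) / (r - l)))) has_integral
    (r - l) / (\<beta> - \<alpha>) * integral {\<alpha>..\<beta>} V) {l..r}"
proof -
  define c where "c = (\<beta> - \<alpha>) / (r - l)"
  have c: "0 < c" "\<alpha> + (r - l) * c = \<beta>" using assms(2,3) by (auto simp: c_def)
  have "((\<lambda>s. c *\<^sub>R V (\<alpha> + (s - l) * c)) has_integral integral {\<alpha> + (l - l) * c..\<alpha> + (r - l) * c} V)
    {l..r}"
  proof (rule has_integral_substitution[OF _ _ _ V])
    show "(\<lambda>s. \<alpha> + (s - l) * c) ` {l..r} \<subseteq> {\<alpha>..\<beta>}"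
      using c mult_right_mono[of _ "r - l" c] by auto
    show "((\<lambda>s. \<alpha> + (s - l) * c) has_real_derivative c) (at x within {l..r})" for x
      by (auto intro!: derivative_eq_intros)
  qed (use assms(2) c in auto)
  from has_integral_mult_right[OF this, of "1 / c"]
  have "((\<lambda>s. V (\<alpha> + (s - l) * c)) has_integral integral {\<alpha>..\<beta>} V / c) {l..r}"
    using c by simp
  then show ?thesis using assms(2,3) by (simp add: c_def mult.commute)
qed

definition prim :: "(real \<Rightarrow> real) \<Rightarrow> real \<Rightarrow> real \<Rightarrow> real" where
  "prim V a t = integral {a..t} V"

definition energy_closed_form ::
    "(real \<Rightarrow> real) \<Rightarrow> (real \<Rightarrow> real) \<Rightarrow> real \<Rightarrow> nat \<Rightarrow> (nat \<Rightarrow> real) \<Rightarrow> (nat \<Rightarrow> real) \<Rightarrow> real" where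
  "energy_closed_form \<phi> V a K p e =
    (\<Sum>k=1..K. (e k - e (k - 1)) * \<phi> ((p k - p (k - 1)) / (e k - e (k - 1)))
      + (p k - p (k - 1)) / (e k - e (k - 1)) * (prim V a (e k) - prim V a (e (k - 1))))"

lemma has_integral_prim_diff:
  assumes "continuous_on {a..b} V" "a \<le> l" "l \<le> r" "r \<le> b"
  shows "(V has_integral (prim V a r - prim V a l)) {l..r}"
proof -
  have iV: "V integrable_on {a..r}"
    by (rule integrable_on_subinterval[OF integrable_continuous_interval[OF assms(1)]])
      (use assms in auto)
  have "integral {a..l} V + integral {l..r} V = integral {a..r} V"
    by (rule Henstock_Kurzweil_Integration.integral_combine) (use assms iV in auto)
  moreover have "V integrable_on {l..r}"
    by (rule integrable_on_subinterval[OF integrable_continuous_interval[OF assms(1)]])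
      (use assms in auto)
  ultimately show ?thesis unfolding prim_def by (metis add_diff_cancel_left' has_integral_integral)
qed

locale step_energy =
  fixes K :: nat and p e :: "nat \<Rightarrow> real" and a b :: real and V :: "real \<Rightarrow> real"
  assumes incp: "increasing_upto K p" and K1: "1 \<le> K" and ince: "increasing_upto K e"
    and e0: "e 0 = a" and eK: "e K = b" and Vc: "continuous_on {a..b} V"
begin

lemma e_range: "k \<le> K \<Longrightarrow> a \<le> e k \<and> e k \<le> b"
  using increasing_upto_le[OF ince, of 0 k] increasing_upto_le[OF ince, of k K] e0 eK by auto

abbreviation rho :: "nat \<Rightarrow> real" where
  "rho k \<equiv> (p k - p (k - 1)) / (e k - e (k - 1))"

lemma step_density_on_cell:
  "1 \<le> k \<Longrightarrow> k \<le> K \<Longrightarrow> t \<in> {e (k - 1)..e k} - {e (k - 1)} \<Longrightarrow> step_density K p e t = rho k"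
  unfolding step_density_def using sum_indicator_cells[OF ince, of k t] by auto

lemma has_integral_step_density_cells:
  fixes F :: "real \<Rightarrow> real \<Rightarrow> real"
  assumes "\<And>k. 1 \<le> k \<Longrightarrow> k \<le> K \<Longrightarrow> ((\<lambda>t. F (rho k) t) has_integral I k) {e (k - 1)..e k}"
  shows "((\<lambda>t. F (step_density K p e t) t) has_integral (\<Sum>k=1..K. I k)) {a..b}"
proof -
  have "((\<lambda>t. F (step_density K p e t) t) has_integral (\<Sum>k=1..K. I k)) {e 0..e K}"
  proof (rule has_integral_cells[OF ince order_refl])
    fix k assume k: "1 \<le> k" "k \<le> K"
    show "((\<lambda>t. F (step_density K p e t) t) has_integral I k) {e (k - 1)..e k}"
      by (rule has_integral_spike_finite[OF _ _ assms[OF k], of "{e (k - 1)}"])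
        (use step_density_on_cell[OF k] in auto)
  qed
  then show ?thesis using e0 eK by simp
qed

lemma has_integral_phi_step_density:
  "((\<lambda>t. \<phi> (step_density K p e t)) has_integral (\<Sum>k=1..K. (e k - e (k - 1)) * \<phi> (rho k))) {a..b}"
proof (rule has_integral_step_density_cells)
  fix k assume "1 \<le> k" "k \<le> K"
  then have "e (k - 1) < e k" using increasing_upto_step[OF ince] by auto
  then show "((\<lambda>t. \<phi> (rho k)) has_integral (e k - e (k - 1)) * \<phi> (rho k)) {e (k - 1)..e k}"
    using has_integral_const_real[of "\<phi> (rho k)" "e (k - 1)" "e k"] by simp
qed

lemma has_integral_step_density_V:
  "((\<lambda>t. step_density K p e t * V t) has_integral
    (\<Sum>k=1..K. rho k * (prim V a (e k) - prim V a (e (k - 1))))) {a..b}"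
proof (rule has_integral_step_density_cells)
  fix k assume k: "1 \<le> k" "k \<le> K"
  have "e (k - 1) < e k" "a \<le> e (k - 1)" "e k \<le> b"
    using increasing_upto_step[OF ince k] e_range k by auto
  then show "((\<lambda>t. rho k * V t) has_integral rho k * (prim V a (e k) - prim V a (e (k - 1))))
    {e (k - 1)..e k}"
    by (intro has_integral_mult_right has_integral_prim_diff[OF Vc]) auto
qed

lemma E_cont_step_density: "E_cont \<phi> V a b (step_density K p e) = energy_closed_form \<phi> V a K p e"
  unfolding E_cont_def energy_closed_form_def
  using integral_unique[OF has_integral_phi_step_density] integral_unique[OF has_integral_step_density_V]
  by (simp add: sum.distrib)

lemma has_integral_V_pwlin_cell:
  assumes k: "1 \<le> k" "k \<le> K"
  shows "((\<lambda>s. V (pwlin K p e s)) has_integral rho k * (prim V a (e k) - prim V a (e (k - 1))))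
    {p (k - 1)..p k}"
proof -
  have lt: "p (k - 1) < p k" "e (k - 1) < e k"
    using increasing_upto_step[OF incp k] increasing_upto_step[OF ince k] .
  have r: "a \<le> e (k - 1)" "e k \<le> b" using e_range k by auto
  have "((\<lambda>s. V (pwlin K p e s)) has_integral rho k * integral {e (k - 1)..e k} V) {p (k - 1)..p k}"
  proof (rule has_integral_eq[OF _ has_integral_affine_comp[OF _ lt]])
    show "continuous_on {e (k - 1)..e k} V" by (rule continuous_on_subset[OF Vc]) (use r in auto)
    fix s assume "s \<in> {p (k - 1)..p k}"
    then show "V (e (k - 1) + (s - p (k - 1)) * ((e k - e (k - 1)) / (p k - p (k - 1))))
      = V (pwlin K p e s)"
      using pwlin_on_cell[OF incp k, of s e] by (simp add: times_divide_eq_right)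
  qed
  then show ?thesis
    using integral_unique[OF has_integral_prim_diff[OF Vc r(1) less_imp_le[OF lt(2)] r(2)]] by simp
qed

lemma has_integral_V_pwlin:
  "((\<lambda>s. V (pwlin K p e s)) has_integral (\<Sum>k=1..K. rho k * (prim V a (e k) - prim V a (e (k - 1)))))
    {p 0..p K}"
  by (rule has_integral_cells[OF incp order_refl has_integral_V_pwlin_cell])

end

lemma E_disc_eq_closed_form:
  assumes mesh: "is_mesh M K \<xi>" and K1: "1 \<le> K" and x: "x \<in> xset a b K" and Vc: "continuous_on {a..b} V"
  shows "E_disc \<phi> V a b M K \<xi> x = energy_closed_form \<phi> V a K \<xi> (ext_vec a b K x)"
proof -
  let ?e = "ext_vec a b K x"
  have incp: "increasing_upto K \<xi>" using mesh_increasing[OF mesh] .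
  have ince: "increasing_upto K ?e" using ext_vec_increasing[OF x] .
  interpret step_energy K \<xi> ?e a b V using incp K1 ince Vc by unfold_locales auto
  have m0: "\<xi> 0 = 0" "\<xi> K = M" using mesh unfolding is_mesh_def by auto
  have internal_part: "(\<Sum>k=1..K. mesh_delta \<xi> k *
        (let s = (?e k - ?e (k - 1)) / mesh_delta \<xi> k in s * \<phi> (1 / s))) =
      (\<Sum>k=1..K. (?e k - ?e (k - 1)) * \<phi> ((\<xi> k - \<xi> (k - 1)) / (?e k - ?e (k - 1))))"
  proof (rule sum.cong[OF refl])
    fix k assume k: "k \<in> {1..K}"
    have "\<xi> (k - 1) < \<xi> k" using increasing_upto_step[OF incp] k by auto
    then show "mesh_delta \<xi> k * (let s = (?e k - ?e (k - 1)) / mesh_delta \<xi> k in s * \<phi> (1 / s)) =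
      (?e k - ?e (k - 1)) * \<phi> ((\<xi> k - \<xi> (k - 1)) / (?e k - ?e (k - 1)))"
      unfolding mesh_delta_def Let_def by simp
  qed
  have potential_part: "integral {0..M} (\<lambda>s. V (X_xi a b K \<xi> x s)) =
     (\<Sum>k=1..K. (\<xi> k - \<xi> (k - 1)) / (?e k - ?e (k - 1)) * (prim V a (?e k) - prim V a (?e (k - 1))))"
    using integral_unique[OF has_integral_V_pwlin] m0 unfolding X_xi_eq_pwlin by simp
  show ?thesis unfolding E_disc_def energy_closed_form_def internal_part potential_part by (simp add: sum.distrib)
qed

lemma E_cont_u_xi:
  assumes mesh: "is_mesh M K \<xi>" and K1: "1 \<le> K" and Vc: "continuous_on {a..b} V"
    and y: "y \<in> xset a b K"
  shows "E_cont \<phi> V a b (u_xi a b K \<xi> y) = E_disc \<phi> V a b M K \<xi> y"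
proof -
  interpret step_energy K \<xi> "ext_vec a b K y" a b V
    using mesh_increasing[OF mesh] K1 ext_vec_increasing[OF y] Vc by unfold_locales auto
  show ?thesis
    unfolding u_xi_eq_step_density E_cont_step_density E_disc_eq_closed_form[OF mesh K1 y Vc] ..
qed

section \<open>The mass matrix\<close>

lemma sum_interior_eq:
  fixes h :: "nat \<Rightarrow> real"
  assumes "1 \<le> K" "h 0 = 0" "h K = 0"
  shows "(\<Sum>j=1..K-1. h j) = (\<Sum>j=0..K. h j)"
proof -
  have "{0..K} = insert 0 (insert K {1..K-1})" using assms(1) by auto
  moreover have "0 \<notin> insert K {1..K-1}" "K \<notin> {1..K-1}" using assms(1) by auto
  ultimately show ?thesis using assms by simp
qed

lemma Wmat_row:
  assumes K1: "1 \<le> K" and i: "1 \<le> i" "i < K" and z: "z 0 = 0" "z K = 0"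
  shows "(\<Sum>j=1..K-1. Wmat \<xi> i j * z j) =
     (mesh_delta \<xi> i + mesh_delta \<xi> (i + 1)) / 3 * z i + mesh_delta \<xi> (i + 1) / 6 * z (i + 1)
      + mesh_delta \<xi> i / 6 * z (i - 1)"
proof -
  have "(\<Sum>j=1..K-1. Wmat \<xi> i j * z j) = (\<Sum>j=0..K. Wmat \<xi> i j * z j)"
    by (rule sum_interior_eq) (use K1 z in auto)
  also have "\<dots> = (\<Sum>j\<in>{i - 1, i, i + 1}. Wmat \<xi> i j * z j)"
    by (rule sum.mono_neutral_right) (use i in \<open>auto simp: Wmat_def\<close>)
  also have "\<dots> = Wmat \<xi> i (i - 1) * z (i - 1) + Wmat \<xi> i i * z i + Wmat \<xi> i (i + 1) * z (i + 1)"
  proof -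
    have "i - 1 \<noteq> i" "i - 1 \<noteq> i + 1" "i \<noteq> i + 1" using i by auto
    then show ?thesis by (simp add: algebra_simps)
  qed
  also have "\<dots> = (mesh_delta \<xi> i + mesh_delta \<xi> (i + 1)) / 3 * z i + mesh_delta \<xi> (i + 1) / 6 * z (i + 1)
      + mesh_delta \<xi> i / 6 * z (i - 1)"
  proof -
    have "i - 1 \<noteq> i" "i - 1 \<noteq> i + 1" "i \<noteq> i + 1" "i = i - 1 + 1" using i by auto
    then show ?thesis unfolding Wmat_def by (simp add: algebra_simps)
  qed
  finally show ?thesis .
qed

lemma Wmat_quadratic_form:
  assumes K1: "1 \<le> K" and z: "z 0 = 0" "z K = 0"
  shows "(\<Sum>i=1..K-1. z i * (\<Sum>j=1..K-1. Wmat \<xi> i j * z j)) = sqnorm_pwlin K \<xi> z"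
proof -
  let ?d = "mesh_delta \<xi>"
  have "(\<Sum>i=1..K-1. z i * (\<Sum>j=1..K-1. Wmat \<xi> i j * z j)) =
     (\<Sum>i=1..K-1. ?d i * (z i)\<^sup>2 / 3 + ?d (i + 1) * (z i)\<^sup>2 / 3 + ?d (i + 1) * z i * z (i + 1) / 6
        + ?d i * z (i - 1) * z i / 6)"
    by (rule sum.cong[OF refl])
      (use Wmat_row[OF K1 _ _ z] in \<open>auto simp: power2_eq_square algebra_simps\<close>)
  also have "\<dots> = (\<Sum>i=1..K-1. ?d i * (z i)\<^sup>2 / 3) + (\<Sum>i=1..K-1. ?d (i + 1) * (z i)\<^sup>2 / 3)
       + (\<Sum>i=1..K-1. ?d (i + 1) * z i * z (i + 1) / 6) + (\<Sum>i=1..K-1. ?d i * z (i - 1) * z i / 6)"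
    by (simp add: sum.distrib)
  also have "(\<Sum>i=1..K-1. ?d i * (z i)\<^sup>2 / 3) = (\<Sum>k=1..K. ?d k * (z k)\<^sup>2 / 3)"
  proof -
    have "{1..K} = insert K {1..K-1}" "K \<notin> {1..K-1}" using K1 by auto
    then show ?thesis using z by simp
  qed
  also have "(\<Sum>i=1..K-1. ?d (i + 1) * (z i)\<^sup>2 / 3) = (\<Sum>k=1..K. ?d k * (z (k - 1))\<^sup>2 / 3)"
  proof -
    have "(\<Sum>i=1..K-1. ?d (i + 1) * (z i)\<^sup>2 / 3) = (\<Sum>i=0..K-1. ?d (i + 1) * (z i)\<^sup>2 / 3)"
    proof -
      have "{0..K-1} = insert 0 {1..K-1}" "0 \<notin> {1..K-1}" by auto
      then show ?thesis using z by simp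
    qed
    also have "\<dots> = (\<Sum>k=1..K. ?d k * (z (k - 1))\<^sup>2 / 3)"
      by (rule sum.reindex_bij_witness[of _ "\<lambda>k. k - 1" "\<lambda>i. i + 1"]) (use K1 in auto)
    finally show ?thesis .
  qed
  also have "(\<Sum>i=1..K-1. ?d (i + 1) * z i * z (i + 1) / 6) = (\<Sum>k=1..K. ?d k * z (k - 1) * z k / 6)"
  proof -
    have "(\<Sum>i=1..K-1. ?d (i + 1) * z i * z (i + 1) / 6) = (\<Sum>i=0..K-1. ?d (i + 1) * z i * z (i + 1) / 6)"
    proof -
      have "{0..K-1} = insert 0 {1..K-1}" "0 \<notin> {1..K-1}" by auto
      then show ?thesis using z by simp
    qed
    also have "\<dots> = (\<Sum>k=1..K. ?d k * z (k - 1) * z k / 6)"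
      by (rule sum.reindex_bij_witness[of _ "\<lambda>k. k - 1" "\<lambda>i. i + 1"]) (use K1 in auto)
    finally show ?thesis .
  qed
  also have "(\<Sum>i=1..K-1. ?d i * z (i - 1) * z i / 6) = (\<Sum>k=1..K. ?d k * z (k - 1) * z k / 6)"
  proof -
    have "{1..K} = insert K {1..K-1}" "K \<notin> {1..K-1}" using K1 by auto
    then show ?thesis using z by simp
  qed
  finally have "(\<Sum>i=1..K-1. z i * (\<Sum>j=1..K-1. Wmat \<xi> i j * z j)) =
      (\<Sum>k=1..K. ?d k * (z k)\<^sup>2 / 3) + (\<Sum>k=1..K. ?d k * (z (k - 1))\<^sup>2 / 3)
       + (\<Sum>k=1..K. ?d k * z (k - 1) * z k / 6) + (\<Sum>k=1..K. ?d k * z (k - 1) * z k / 6)" .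
  also have "\<dots> = sqnorm_pwlin K \<xi> z"
    unfolding sqnorm_pwlin_def mesh_delta_def sum.distrib[symmetric]
    by (rule sum.cong[OF refl]) (simp add: power2_eq_square field_simps)
  finally show ?thesis .
qed

lemma has_real_derivative_mixed_sq:
  assumes u: "(u has_real_derivative u') (at t0)" and v: "(v has_real_derivative v') (at t0)"
  shows "((\<lambda>t. c * ((u t)\<^sup>2 + u t * v t + (v t)\<^sup>2) / 3) has_real_derivative
           c * (2 * u t0 * u' + u' * v t0 + u t0 * v' + 2 * v t0 * v') / 3) (at t0)"
  by (rule derivative_eq_intros u v refl | simp add: algebra_simps)+

lemma sum_mixed_sq_derivative_unit:
  fixes c d :: "nat \<Rightarrow> real"
  assumes k: "1 \<le> k" "k < K"
  defines "\<delta> \<equiv> \<lambda>i. if i = k then 1 else 0"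
  shows "(\<Sum>j=1..K. c j * (2 * d (j - 1) * \<delta> (j - 1) + \<delta> (j - 1) * d j + d (j - 1) * \<delta> j + 2 * d j * \<delta> j) / 3)
    = c k * (d (k - 1) + 2 * d k) / 3 + c (k + 1) * (2 * d k + d (k + 1)) / 3"
proof -
  have "(\<Sum>j=1..K. c j * (2 * d (j - 1) * \<delta> (j - 1) + \<delta> (j - 1) * d j + d (j - 1) * \<delta> j + 2 * d j * \<delta> j) / 3)
     = (\<Sum>j=1..K. (if j = k then c k * (d (k - 1) + 2 * d k) / 3 else 0)
                + (if j = k + 1 then c (k + 1) * (2 * d k + d (k + 1)) / 3 else 0))"
  proof (rule sum.cong[OF refl])
    fix j assume j: "j \<in> {1..K}"
    consider "j = k" | "j = k + 1" | "j \<noteq> k" "j \<noteq> k + 1" "j - 1 \<noteq> k" using j by force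
    then show "c j * (2 * d (j - 1) * \<delta> (j - 1) + \<delta> (j - 1) * d j + d (j - 1) * \<delta> j + 2 * d j * \<delta> j) / 3
      = (if j = k then c k * (d (k - 1) + 2 * d k) / 3 else 0)
        + (if j = k + 1 then c (k + 1) * (2 * d k + d (k + 1)) / 3 else 0)"
      by cases (use k in \<open>auto simp: \<delta>_def algebra_simps\<close>)
  qed
  also have "\<dots> = c k * (d (k - 1) + 2 * d k) / 3 + c (k + 1) * (2 * d k + d (k + 1)) / 3"
    using k by (simp add: sum.distrib)
  finally show ?thesis .
qed

lemma sqnorm_pwlin_coordinate_deriv:
  fixes a b :: real and K k :: nat and x x' \<xi> :: "nat \<Rightarrow> real"
  assumes k: "1 \<le> k" "k < K"
  defines "d \<equiv> \<lambda>i. ext_vec a b K x i - ext_vec a b K x' i"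
  shows "((\<lambda>t. sqnorm_pwlin K \<xi> (\<lambda>i. ext_vec a b K (x(k := t)) i - ext_vec a b K x' i))
    has_real_derivative 2 * (\<Sum>j=1..K-1. Wmat \<xi> k j * d j)) (at (x k))"
proof -
  have K1: "1 \<le> K" using k by simp
  have dz: "d 0 = 0" "d K = 0" unfolding d_def using K1 by auto
  let ?D = "\<lambda>t i. ext_vec a b K (x(k := t)) i - ext_vec a b K x' i"
  define \<delta> where "\<delta> = (\<lambda>i. if i = k then 1 else (0::real))"
  have "((\<lambda>t. ?D t i) has_real_derivative \<delta> i) (at (x k))" for i
    unfolding \<delta>_def using ext_vec_upd[OF k, of a b x]
    by (cases "i = k") (auto intro!: derivative_eq_intros)
  from has_real_derivative_mixed_sq[OF this this]
  have "((\<lambda>t. sqnorm_pwlin K \<xi> (?D t)) has_real_derivative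
      (\<Sum>j=1..K. (\<xi> j - \<xi> (j - 1)) *
        (2 * d (j - 1) * \<delta> (j - 1) + \<delta> (j - 1) * d j + d (j - 1) * \<delta> j + 2 * d j * \<delta> j) / 3)) (at (x k))"
    unfolding sqnorm_pwlin_def d_def by (intro DERIV_sum) simp
  moreover have "(\<Sum>j=1..K. (\<xi> j - \<xi> (j - 1)) *
        (2 * d (j - 1) * \<delta> (j - 1) + \<delta> (j - 1) * d j + d (j - 1) * \<delta> j + 2 * d j * \<delta> j) / 3)
      = (\<xi> k - \<xi> (k - 1)) * (d (k - 1) + 2 * d k) / 3 + (\<xi> (k + 1) - \<xi> k) * (2 * d k + d (k + 1)) / 3"
    unfolding \<delta>_def using sum_mixed_sq_derivative_unit[OF k, of "\<lambda>j. \<xi> j - \<xi> (j - 1)" d] by simp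
  moreover have "(\<xi> k - \<xi> (k - 1)) * (d (k - 1) + 2 * d k) / 3 + (\<xi> (k + 1) - \<xi> k) * (2 * d k + d (k + 1)) / 3
      = 2 * (\<Sum>j=1..K-1. Wmat \<xi> k j * d j)"
    unfolding Wmat_row[OF K1 k dz] mesh_delta_def by (simp add: field_simps)
  ultimately show ?thesis by simp
qed

lemma Wmat_kernel_trivial:
  assumes incp: "increasing_upto K \<xi>" and K1: "1 \<le> K" and w: "w 0 = 0" "w K = 0"
    and Ww: "\<And>i. i \<in> {1..K-1} \<Longrightarrow> (\<Sum>j=1..K-1. Wmat \<xi> i j * w j) = 0"
    and i: "i \<in> {1..K-1}"
  shows "w i = 0"
proof -
  have "sqnorm_pwlin K \<xi> w = (\<Sum>i=1..K-1. w i * (\<Sum>j=1..K-1. Wmat \<xi> i j * w j))"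
    using Wmat_quadratic_form[OF K1 w] by simp
  also have "\<dots> = 0" using Ww by simp
  finally show ?thesis using sqnorm_pwlin_eq_0[OF incp, of w i] i by auto
qed

lemma Winv_quad_eq:
  fixes \<xi> d g :: "nat \<Rightarrow> real" and \<tau> :: real
  assumes incp: "increasing_upto K \<xi>" and K1: "1 \<le> K" and tau: "\<tau> \<noteq> 0"
    and d: "d 0 = 0" "d K = 0"
    and g: "\<And>i. i \<in> {1..K-1} \<Longrightarrow> g i = - (\<Sum>j=1..K-1. Wmat \<xi> i j * d j) / \<tau>"
  shows "Winv_quad \<xi> K g = sqnorm_pwlin K \<xi> d / \<tau>\<^sup>2"
proof -
  define y0 where "y0 = (\<lambda>i. if i \<in> {1..K-1} then - d i / \<tau> else 0)"
  let ?P = "\<lambda>y. (\<forall>i\<in>{1..K-1}. (\<Sum>j=1..K-1. Wmat \<xi> i j * y j) = g i) \<and> (\<forall>i. i \<notin> {1..K-1} \<longrightarrow> y i = 0)"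
  have sumy0: "(\<Sum>j=1..K-1. Wmat \<xi> i j * y0 j) = - (\<Sum>j=1..K-1. Wmat \<xi> i j * d j) / \<tau>" for i
  proof -
    have "(\<Sum>j=1..K-1. Wmat \<xi> i j * y0 j) = (\<Sum>j=1..K-1. - (Wmat \<xi> i j * d j) / \<tau>)"
      by (rule sum.cong[OF refl]) (simp add: y0_def)
    also have "\<dots> = - (\<Sum>j=1..K-1. Wmat \<xi> i j * d j) / \<tau>"
      by (simp add: sum_negf sum_divide_distrib)
    finally show ?thesis .
  qed
  have Py0: "?P y0" using sumy0 g by (auto simp: y0_def)
  have uniq: "y = y0" if Py: "?P y" for y
  proof
    fix i
    have "(\<Sum>j=1..K-1. Wmat \<xi> i j * (y j - y0 j)) = 0" if "i \<in> {1..K-1}" for i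
      using Py Py0 that by (simp add: sum_subtractf right_diff_distrib)
    then have "i \<in> {1..K-1} \<Longrightarrow> y i - y0 i = 0"
      using Wmat_kernel_trivial[OF incp K1, of "\<lambda>i. y i - y0 i"] Py K1 by (simp add: y0_def)
    then show "y i = y0 i" using Py by (cases "i \<in> {1..K-1}") (auto simp: y0_def)
  qed
  have "(THE y. ?P y) = y0" by (rule the_equality[of ?P, OF Py0 uniq])
  then have "Winv_quad \<xi> K g = (\<Sum>i=1..K-1. g i * y0 i)" unfolding Winv_quad_def by simp
  also have "\<dots> = (\<Sum>i=1..K-1. d i * (\<Sum>j=1..K-1. Wmat \<xi> i j * d j)) / \<tau>\<^sup>2"
    unfolding sum_divide_distrib
    by (rule sum.cong[OF refl]) (use g tau in \<open>auto simp: y0_def power2_eq_square\<close>)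
  also have "\<dots> = sqnorm_pwlin K \<xi> d / \<tau>\<^sup>2" using Wmat_quadratic_form[OF K1 d] by simp
  finally show ?thesis .
qed

section \<open>The discrete Euler--Lagrange equation\<close>

lemma xset_upd:
  assumes x: "x \<in> xset a b K" and k: "1 \<le> k" "k < K"
    and t: "ext_vec a b K x (k - 1) < t" "t < ext_vec a b K x (k + 1)"
  shows "x(k:=t) \<in> xset a b K"
  unfolding xset_def
proof (intro CollectI allI impI)
  fix j assume j: "1 \<le> j \<and> j \<le> K"
  have xs: "ext_vec a b K x (j - 1) < ext_vec a b K x j" using x j unfolding xset_def by auto
  show "ext_vec a b K (x(k := t)) (j - 1) < ext_vec a b K (x(k := t)) j"
  proof (cases "j = k")
    case True
    then show ?thesis using t ext_vec_upd[OF k, of a b x t] k by simp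
  next
    case False
    show ?thesis
    proof (cases "j = k + 1")
      case True
      then show ?thesis using t ext_vec_upd[OF k, of a b x t] k by simp
    next
      case False2: False
      have "j - 1 \<noteq> k" using False2 j by auto
      then show ?thesis using xs False ext_vec_upd[OF k, of a b x t] by simp
    qed
  qed
qed

lemma prim_has_real_derivative:
  assumes Vc: "continuous_on {a..b} V" and y: "a < y" "y < b"
  shows "(prim V a has_real_derivative V y) (at y)"
proof -
  have "(prim V a has_real_derivative V y) (at y within {a..b})"
    unfolding prim_def by (rule integral_has_real_derivative[OF Vc]) (use y in auto)
  then have "(prim V a has_real_derivative V y) (at y within {a<..<b})"
    by (rule DERIV_subset) auto
  then show ?thesis using at_within_open[of y "{a<..<b}"] y by simp
qed

lemma closed_form_differentiable:
  assumes x: "x \<in> xset a b K" and k: "1 \<le> k" "k < K" and incp: "increasing_upto K p"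
    and Vc: "continuous_on {a..b} V" and phid: "\<And>r. r > 0 \<Longrightarrow> \<phi> differentiable (at r)"
  shows "(\<lambda>t. energy_closed_form \<phi> V a K p (ext_vec a b K (x(k:=t)))) differentiable (at (x k))"
proof -
  let ?e = "ext_vec a b K x"
  let ?E = "\<lambda>t i. ext_vec a b K (x(k:=t)) i"
  have K1: "1 \<le> K" using k by simp
  have ince: "increasing_upto K ?e" using ext_vec_increasing[OF x] .
  have dE: "(\<lambda>t. ?E t i) differentiable (at (x k))" for i
    using ext_vec_upd[OF k, of a b x] by (cases "i = k") simp_all
  have xk: "a < x k" "x k < b"
  proof -
    have "?e 0 < ?e k" "?e k < ?e K"
      using increasing_upto_less[OF ince, of 0 k] increasing_upto_less[OF ince, of k K] k by auto
    then show "a < x k" "x k < b" using k unfolding ext_vec_def by auto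
  qed
  have dWE: "(\<lambda>t. prim V a (?E t i)) differentiable (at (x k))" for i
  proof (cases "i = k")
    case True
    have "prim V a differentiable (at (x k))"
      using prim_has_real_derivative[OF Vc xk] unfolding real_differentiable_def by blast
    then show ?thesis using True ext_vec_upd[OF k, of a b x] by simp
  next
    case False then show ?thesis using ext_vec_upd[OF k, of a b x] by simp
  qed
  have dterm: "(\<lambda>t. (?E t j - ?E t (j - 1)) * \<phi> ((p j - p (j - 1)) / (?E t j - ?E t (j - 1)))
       + (p j - p (j - 1)) / (?E t j - ?E t (j - 1)) * (prim V a (?E t j) - prim V a (?E t (j - 1))))
       differentiable (at (x k))" if j: "j \<in> {1..K}" for j
  proof -
    have pos: "?e (j - 1) < ?e j" "p (j - 1) < p j"
      using increasing_upto_step[OF ince] increasing_upto_step[OF incp] j by auto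
    have dd: "(\<lambda>t. ?E t j - ?E t (j - 1)) differentiable (at (x k))"
      using dE[of j] dE[of "j - 1"] by (rule differentiable_diff)
    have dq: "(\<lambda>t. (p j - p (j - 1)) / (?E t j - ?E t (j - 1))) differentiable (at (x k))"
      by (rule differentiable_divide[OF differentiable_const dd]) (use pos in simp)
    have "\<phi> differentiable (at ((p j - p (j - 1)) / (?E (x k) j - ?E (x k) (j - 1))))"
      by (rule phid) (use pos in simp)
    then have dphi: "(\<lambda>t. \<phi> ((p j - p (j - 1)) / (?E t j - ?E t (j - 1)))) differentiable (at (x k))"
      by (rule differentiable_compose[OF _ dq])
    show ?thesis
      by (intro differentiable_add differentiable_mult dd dphi dq differentiable_diff dWE)
  qed
  show ?thesis unfolding energy_closed_form_def by (rule differentiable_sum) (use dterm in auto)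
qed

lemma E_disc_coordinate_differentiable:
  assumes mesh: "is_mesh M K \<xi>" and Vc: "continuous_on {a..b} V"
    and phid: "\<And>r. r > 0 \<Longrightarrow> \<phi> differentiable (at r)"
    and y: "y \<in> xset a b K" and k: "1 \<le> k" "k < K"
  shows "(\<lambda>t. E_disc \<phi> V a b M K \<xi> (y(k := t))) differentiable (at (y k))"
proof -
  let ?e = "ext_vec a b K y"
  let ?C = "\<lambda>t. energy_closed_form \<phi> V a K \<xi> (ext_vec a b K (y(k := t)))"
  have K1: "1 \<le> K" using k by simp
  obtain D where dC: "(?C has_real_derivative D) (at (y k))"
    using closed_form_differentiable[OF y k mesh_increasing[OF mesh] Vc phid]
    unfolding real_differentiable_def by blast
  have "?e (k - 1) < ?e k" "?e k < ?e (k + 1)"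
    using increasing_upto_step[OF ext_vec_increasing[OF y], of k]
      increasing_upto_step[OF ext_vec_increasing[OF y], of "k + 1"] k by auto
  then have nbhd: "y k \<in> {?e (k - 1)<..<?e (k + 1)}" using k by (simp add: ext_vec_def)
  have "((\<lambda>t. E_disc \<phi> V a b M K \<xi> (y(k := t))) has_real_derivative D) (at (y k))"
  proof (rule has_field_derivative_transform_within_open[OF dC _ nbhd])
    fix t assume "t \<in> {?e (k - 1)<..<?e (k + 1)}"
    then have "y(k := t) \<in> xset a b K" using xset_upd[OF y k] by auto
    then show "?C t = E_disc \<phi> V a b M K \<xi> (y(k := t))"
      using E_disc_eq_closed_form[OF mesh K1 _ Vc] by simp
  qed simp
  then show ?thesis unfolding real_differentiable_def by blast
qed

lemma grad_E_disc_at_minimizer: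
  fixes x' :: "nat \<Rightarrow> real"
  assumes mesh: "is_mesh M K \<xi>" and Vc: "continuous_on {a..b} V"
    and phid: "\<And>r. r > 0 \<Longrightarrow> \<phi> differentiable (at r)" and tau: "\<tau> \<noteq> 0"
    and y: "y \<in> xset a b K"
    and min: "\<And>y'. y' \<in> xset a b K \<Longrightarrow>
      1 / (2 * \<tau>) * sqnorm_pwlin K \<xi> (\<lambda>i. ext_vec a b K y i - ext_vec a b K x' i)
        + E_disc \<phi> V a b M K \<xi> y
      \<le> 1 / (2 * \<tau>) * sqnorm_pwlin K \<xi> (\<lambda>i. ext_vec a b K y' i - ext_vec a b K x' i)
        + E_disc \<phi> V a b M K \<xi> y'"
    and k: "k \<in> {1..K-1}"
  shows "grad_E_disc \<phi> V a b M K \<xi> y k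
    = - (\<Sum>j=1..K-1. Wmat \<xi> k j * (ext_vec a b K y j - ext_vec a b K x' j)) / \<tau>"
proof -
  have k: "1 \<le> k" "k < K" using k by auto
  let ?e = "ext_vec a b K y"
  let ?d = "\<lambda>j. ?e j - ext_vec a b K x' j"
  let ?E = "\<lambda>t. E_disc \<phi> V a b M K \<xi> (y(k := t))"
  let ?F = "\<lambda>t. 1 / (2 * \<tau>) * sqnorm_pwlin K \<xi> (\<lambda>i. ext_vec a b K (y(k := t)) i - ext_vec a b K x' i)
    + ?E t"
  have dE: "(?E has_real_derivative grad_E_disc \<phi> V a b M K \<xi> y k) (at (y k))"
    using E_disc_coordinate_differentiable[OF mesh Vc phid y k]
    unfolding grad_E_disc_def by (simp add: DERIV_deriv_iff_real_differentiable)
  have dF: "(?F has_real_derivative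
      1 / (2 * \<tau>) * (2 * (\<Sum>j=1..K-1. Wmat \<xi> k j * ?d j)) + grad_E_disc \<phi> V a b M K \<xi> y k) (at (y k))"
    using sqnorm_pwlin_coordinate_deriv[OF k, where a = a and b = b and x = y and x' = x' and \<xi> = \<xi>]
    by (intro DERIV_add[OF DERIV_cmult dE])
  define \<delta> where "\<delta> = min (y k - ?e (k - 1)) (?e (k + 1) - y k)"
  have "?e (k - 1) < ?e k" "?e k < ?e (k + 1)"
    using increasing_upto_step[OF ext_vec_increasing[OF y], of k]
      increasing_upto_step[OF ext_vec_increasing[OF y], of "k + 1"] k by auto
  then have \<delta>: "0 < \<delta>" using k by (simp add: \<delta>_def ext_vec_def)
  have "\<forall>t. \<bar>y k - t\<bar> < \<delta> \<longrightarrow> ?F (y k) \<le> ?F t"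
  proof (intro allI impI)
    fix t assume "\<bar>y k - t\<bar> < \<delta>"
    then have "y(k := t) \<in> xset a b K" using xset_upd[OF y k] by (auto simp: \<delta>_def)
    then show "?F (y k) \<le> ?F t" using min by simp
  qed
  then have "1 / (2 * \<tau>) * (2 * (\<Sum>j=1..K-1. Wmat \<xi> k j * ?d j)) + grad_E_disc \<phi> V a b M K \<xi> y k = 0"
    by (rule DERIV_local_min[OF dF \<delta>])
  then show ?thesis using tau by (simp add: field_simps)
qed

lemma Winv_quad_grad_E_disc_at_minimizer:
  fixes x' :: "nat \<Rightarrow> real"
  assumes mesh: "is_mesh M K \<xi>" and K1: "1 \<le> K" and Vc: "continuous_on {a..b} V"
    and phid: "\<And>r. r > 0 \<Longrightarrow> \<phi> differentiable (at r)" and tau: "\<tau> \<noteq> 0"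
    and y: "y \<in> xset a b K"
    and min: "\<And>y'. y' \<in> xset a b K \<Longrightarrow>
      1 / (2 * \<tau>) * sqnorm_pwlin K \<xi> (\<lambda>i. ext_vec a b K y i - ext_vec a b K x' i)
        + E_disc \<phi> V a b M K \<xi> y
      \<le> 1 / (2 * \<tau>) * sqnorm_pwlin K \<xi> (\<lambda>i. ext_vec a b K y' i - ext_vec a b K x' i)
        + E_disc \<phi> V a b M K \<xi> y'"
  shows "Winv_quad \<xi> K (grad_E_disc \<phi> V a b M K \<xi> y)
    = sqnorm_pwlin K \<xi> (\<lambda>i. ext_vec a b K y i - ext_vec a b K x' i) / \<tau>\<^sup>2"
  using grad_E_disc_at_minimizer[OF mesh Vc phid tau y min] K1
  by (intro Winv_quad_eq[OF mesh_increasing[OF mesh] K1 tau]) (auto simp: ext_vec_def)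

lemma sum_le_telescoping:
  fixes A B :: "nat \<Rightarrow> real"
  assumes "\<And>n. 1 \<le> n \<Longrightarrow> A n \<le> B (n - 1) - B n"
  shows "(\<Sum>n=1..N. A n) \<le> B 0 - B N"
proof (induction N)
  case 0 then show ?case by simp
next
  case (Suc N)
  have "(\<Sum>n=1..Suc N. A n) = (\<Sum>n=1..N. A n) + A (Suc N)" by simp
  also have "\<dots> \<le> (B 0 - B N) + (B N - B (Suc N))" using Suc.IH assms[of "Suc N"] by simp
  finally show ?case by simp
qed

theorem lemma12:
  fixes a b M \<tau> :: real and K :: nat and \<xi> :: "nat \<Rightarrow> real"
    and P P1 P2 \<phi> V V1 V2 :: "real \<Rightarrow> real"
    and u :: "nat \<Rightarrow> real \<Rightarrow> real" and x :: "nat \<Rightarrow> nat \<Rightarrow> real"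
  assumes ab: "a < b" and M: "M > 0" and tau: "\<tau> > 0"
    and mesh: "is_mesh M K \<xi>"
    and P_cont: "continuous_on {0..} P" and P0: "P 0 = 0"
    and P_d1: "\<And>r. r > 0 \<Longrightarrow> (P has_real_derivative P1 r) (at r)"
    and P_d2: "\<And>r. r > 0 \<Longrightarrow> (P1 has_real_derivative P2 r) (at r)"
    and P2_cont: "continuous_on {0<..} P2"
    and P1_pos: "\<And>r. r > 0 \<Longrightarrow> P1 r > 0"
    and P1_0: "\<exists>L. (P1 \<longlongrightarrow> L) (at_right 0)"
    and P1_inf: "filterlim P1 at_top at_top"
    and P_conc: "concave_on {0<..} (\<lambda>s. P (1 / s))"
    and phi: "\<exists>\<phi>1. \<forall>r>0. (\<phi> has_real_derivative \<phi>1 r) (at r)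
                      \<and> (\<phi>1 has_real_derivative P1 r / r) (at r)"
    and V_d1: "\<And>y. y \<in> {a..b} \<Longrightarrow> (V has_real_derivative V1 y) (at y within {a..b})"
    and V_d2: "\<And>y. y \<in> {a..b} \<Longrightarrow> (V1 has_real_derivative V2 y) (at y within {a..b})"
    and V2_cont: "continuous_on {a..b} V2"
    and V_bc: "V1 a = 0" "V1 b = 0"
    and tauLambda: "\<tau> * Sup ((\<lambda>y. - V2 y) ` {a..b}) < 1"
    and x_in: "\<And>n. x n \<in> xset a b K"
    and u_def: "\<And>n. u n = u_xi a b K \<xi> (x n)"
    and u_min: "\<And>n v. n \<ge> 1 \<Longrightarrow> v \<in> Dset a b K \<xi> \<Longrightarrow>
        1 / (2 * \<tau>) * (W2 a b (u n) (u (n - 1)))\<^sup>2 + E_cont \<phi> V a b (u n)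
          \<le> 1 / (2 * \<tau>) * (W2 a b v (u (n - 1)))\<^sup>2 + E_cont \<phi> V a b v"
  shows "1 / (2 * \<tau>) * (\<Sum>n=1..N. (W2 a b (u n) (u (n - 1)))\<^sup>2)
           \<le> E_cont \<phi> V a b (u 0) - E_cont \<phi> V a b (u N)
       \<and> \<tau> / 2 * (\<Sum>n=1..N. Winv_quad \<xi> K (grad_E_disc \<phi> V a b M K \<xi> (x n)))
           \<le> E_cont \<phi> V a b (u 0) - E_cont \<phi> V a b (u N)"
proof -
  have K1: "1 \<le> K" using mesh M by (cases K) (auto simp: is_mesh_def)
  have incp: "increasing_upto K \<xi>" using mesh_increasing[OF mesh] .
  have Vc: "continuous_on {a..b} V" by (rule DERIV_continuous_on[OF V_d1])
  have phid: "\<phi> differentiable (at r)" if "r > 0" for r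
    using phi that unfolding real_differentiable_def by blast
  define d where "d n = (\<lambda>j. ext_vec a b K (x n) j - ext_vec a b K (x (n - 1)) j)" for n
  have W2_step: "(W2 a b (u n) (u (n - 1)))\<^sup>2 = sqnorm_pwlin K \<xi> (d n)" for n
    unfolding u_def d_def using W2_u_xi_sq[OF incp K1 x_in x_in] .
  have node_min: "1 / (2 * \<tau>) * sqnorm_pwlin K \<xi> (d n) + E_disc \<phi> V a b M K \<xi> (x n)
      \<le> 1 / (2 * \<tau>) * sqnorm_pwlin K \<xi> (\<lambda>i. ext_vec a b K y i - ext_vec a b K (x (n - 1)) i)
        + E_disc \<phi> V a b M K \<xi> y" if "1 \<le> n" "y \<in> xset a b K" for n y
    using u_min[OF that(1), of "u_xi a b K \<xi> y"] that(2)
    by (simp add: Dset_def W2_step u_def d_def x_in W2_u_xi_sq[OF incp K1 _ x_in]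
        E_cont_u_xi[OF mesh K1 Vc])
  have energy_drop: "1 / (2 * \<tau>) * (W2 a b (u n) (u (n - 1)))\<^sup>2
      \<le> E_cont \<phi> V a b (u (n - 1)) - E_cont \<phi> V a b (u n)" if "1 \<le> n" for n
    using node_min[OF that x_in[of "n - 1"]] unfolding W2_step
    by (simp add: u_def E_cont_u_xi[OF mesh K1 Vc x_in] sqnorm_pwlin_def)
  have Winv_quad_step: "\<tau> / 2 * Winv_quad \<xi> K (grad_E_disc \<phi> V a b M K \<xi> (x n))
      = 1 / (2 * \<tau>) * (W2 a b (u n) (u (n - 1)))\<^sup>2" if "1 \<le> n" for n
    using Winv_quad_grad_E_disc_at_minimizer[OF mesh K1 Vc phid _ x_in node_min[OF that, unfolded d_def]]
      tau
    unfolding W2_step d_def by (simp add: power2_eq_square)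
  have "(\<Sum>n=1..N. \<tau> / 2 * Winv_quad \<xi> K (grad_E_disc \<phi> V a b M K \<xi> (x n)))
      = (\<Sum>n=1..N. 1 / (2 * \<tau>) * (W2 a b (u n) (u (n - 1)))\<^sup>2)"
    using Winv_quad_step by (intro sum.cong) auto
  moreover have "(\<Sum>n=1..N. 1 / (2 * \<tau>) * (W2 a b (u n) (u (n - 1)))\<^sup>2)
      \<le> E_cont \<phi> V a b (u 0) - E_cont \<phi> V a b (u N)"
    by (rule sum_le_telescoping[where B = "\<lambda>n. E_cont \<phi> V a b (u n)", OF energy_drop])
  ultimately show ?thesis by (simp add: sum_distrib_left)
qed

end
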